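(* Let $(S,\mathfrak n,k)$ be a Noetherian local ring, $I$ an $\mathfrak n$-primary ideal, and $R=S/I$ with maximal ideal $\mathfrak m=\mathfrak n/I$. Then $$s(R)\le \ell_S(R)-\sum_{i=0}^{v_S(R)-1}h_S(i)+v_S(R)-1.$$ Moreover, if $I$ is not a power of $\mathfrak n$, the following are equivalent: 1) equality holds above; 2) $\mu(\mathfrak m^{v_S(R)})=1$; 3) the Hilbert function of $R$ satisfies $h_R(i)=h_S(i)$ for $0\le i\le v_S(R)-1$, $h_R(i)=1$ for $v_S(R)\le i\le s(R)$, and $h_R(i)=0$ for $i>s(R)$.
   Context: For an Artinian local ring $(R,\mathfrak m)$, $s(R)$ is the largest $s$ with $\mathfrak m^s\neq0$. For a local ring $(A,\mathfrak a)$, $h_A(i)=\ell_A(\mathfrak a^i/\mathfrak a^{i+1})$. $v_S(R)=\max\{n\mid I\subseteq\mathfrak n^n\}$. $\mu(M)$ is the minimal number of generators of $M$. *)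

theory Defs
  imports "HOL-Algebra.Ideal_Product" "HOL-Algebra.Ring_Divisibility" "HOL-Algebra.QuotRing"
    "HOL-Library.Extended_Nat"
begin

primrec ideal_pow :: "('a, 'b) ring_scheme \<Rightarrow> 'a set \<Rightarrow> nat \<Rightarrow> 'a set" where
  "ideal_pow R I 0 = carrier R"
| "ideal_pow R I (Suc k) = ideal_prod R I (ideal_pow R I k)"

definition local_ring :: "('a, 'b) ring_scheme \<Rightarrow> 'a set \<Rightarrow> bool" where
  "local_ring R n \<longleftrightarrow> cring R \<and> maximalideal n R \<and> (\<forall>J. maximalideal J R \<longrightarrow> J = n)"

definition noetherian_local_ring :: "('a, 'b) ring_scheme \<Rightarrow> 'a set \<Rightarrow> bool" where
  "noetherian_local_ring S n \<longleftrightarrow> noetherian_ring S \<and> local_ring S n"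

definition primary_to :: "('a, 'b) ring_scheme \<Rightarrow> 'a set \<Rightarrow> 'a set \<Rightarrow> bool" where
  "primary_to R n I \<longleftrightarrow> ideal I R \<and> I \<noteq> carrier R
     \<and> (\<forall>a\<in>carrier R. \<forall>b\<in>carrier R. a \<otimes>\<^bsub>R\<^esub> b \<in> I \<longrightarrow> a \<notin> I \<longrightarrow> (\<exists>k::nat. b [^]\<^bsub>R\<^esub> k \<in> I))
     \<and> {x \<in> carrier R. \<exists>k::nat. x [^]\<^bsub>R\<^esub> k \<in> I} = n"

text \<open>Length of the R-module A/B, for ideals B \<subseteq> A of R: the supremum of the lengths r
  of strictly increasing chains of R-submodules of A/B, i.e. (by the correspondence theorem)
  of chains of ideals B = C_0 \<subset> C_1 \<subset> ... \<subset> C_r = A.\<close>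
definition module_length :: "('a, 'b) ring_scheme \<Rightarrow> 'a set \<Rightarrow> 'a set \<Rightarrow> enat" where
  "module_length R B A = Sup {enat r | r. \<exists>C :: nat \<Rightarrow> 'a set.
      C 0 = B \<and> C r = A \<and> (\<forall>i\<le>r. ideal (C i) R) \<and> (\<forall>i<r. C i \<subset> C (Suc i))}"

definition hilbert_fun :: "('a, 'b) ring_scheme \<Rightarrow> 'a set \<Rightarrow> nat \<Rightarrow> enat" where
  "hilbert_fun A a i = module_length A (ideal_pow A a (Suc i)) (ideal_pow A a i)"

definition socle_degree :: "('a, 'b) ring_scheme \<Rightarrow> 'a set \<Rightarrow> nat" where
  "socle_degree R m = (GREATEST s. ideal_pow R m s \<noteq> {\<zero>\<^bsub>R\<^esub>})"

definition v_order :: "('a, 'b) ring_scheme \<Rightarrow> 'a set \<Rightarrow> 'a set \<Rightarrow> nat" where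
  "v_order S n I = (GREATEST v. I \<subseteq> ideal_pow S n v)"

definition min_gens :: "('a, 'b) ring_scheme \<Rightarrow> 'a set \<Rightarrow> nat" where
  "min_gens R M = (LEAST r. \<exists>G. finite G \<and> card G = r \<and> G \<subseteq> M \<and> Idl\<^bsub>R\<^esub> G = M)"

definition quot_ideal :: "('a, 'b) ring_scheme \<Rightarrow> 'a set \<Rightarrow> 'a set \<Rightarrow> 'a set set" where
  "quot_ideal S I n = (\<lambda>x. I +>\<^bsub>S\<^esub> x) ` n"

end

theory Submission
  imports Defs
begin

text \<open>
  Let h be the Hilbert function of the Artinian local ring (R, m) = (S/I, n/I) and s = s(R).
  Since I \<subseteq> n^v, h agrees with h_S below v, and \<ell>(R) is the sum of h(i) over i \<le> s,
  where h(i) \<ge> 1 for i \<le> s because m^(i+1) \<noteq> m^i as long as m^i \<noteq> 0. Hence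
  \<ell>(R) \<ge> h_S(0) + ... + h_S(v-1) + (s - v + 1), with equality iff h(i) = 1 for v \<le> i \<le> s.
  If m^v = (a) is principal, a Macaulay-type argument (comparing (f x) y with (f y) x) shows that
  every m^i with i \<ge> v is generated by one element modulo m^(i+1), so h(i) \<le> 1 there; conversely
  h(v) = 1 makes m^v principal by the graded Nakayama lemma. Finally v \<le> s + 1 always, and v \<le> s
  as soon as I is not a power of n.
\<close>

section \<open>Sums and powers of ideals\<close>

lemma set_add_mem_iff: "x \<in> A <+>\<^bsub>R\<^esub> B \<longleftrightarrow> (\<exists>a\<in>A. \<exists>b\<in>B. x = a \<oplus>\<^bsub>R\<^esub> b)"
  by (auto simp: set_add_def')

lemma set_add_memE:
  assumes "x \<in> A <+>\<^bsub>R\<^esub> B"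
  obtains a b where "a \<in> A" "b \<in> B" "x = a \<oplus>\<^bsub>R\<^esub> b"
  using assms unfolding set_add_mem_iff by blast

lemma set_add_memI: "a \<in> A \<Longrightarrow> b \<in> B \<Longrightarrow> a \<oplus>\<^bsub>R\<^esub> b \<in> A <+>\<^bsub>R\<^esub> B"
  unfolding set_add_mem_iff by blast

lemma set_add_mono: "A \<subseteq> A' \<Longrightarrow> B \<subseteq> B' \<Longrightarrow> A <+>\<^bsub>R\<^esub> B \<subseteq> A' <+>\<^bsub>R\<^esub> B'"
  unfolding subset_iff set_add_mem_iff by blast

context ring
begin

lemma ideal_subset_carrier: "ideal I R \<Longrightarrow> I \<subseteq> carrier R"
  by (meson ideal.Icarr subsetI)

lemma ideal_zero_mem: "ideal I R \<Longrightarrow> \<zero> \<in> I"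
  by (rule additive_subgroup.zero_closed[OF ideal.axioms(1)])

lemma ideal_add_closed: "ideal I R \<Longrightarrow> a \<in> I \<Longrightarrow> b \<in> I \<Longrightarrow> a \<oplus> b \<in> I"
  by (rule additive_subgroup.a_closed[OF ideal.axioms(1)])

lemma ideal_uminus_closed: "ideal I R \<Longrightarrow> a \<in> I \<Longrightarrow> \<ominus> a \<in> I"
  by (rule additive_subgroup.a_inv_closed[OF ideal.axioms(1)])

lemma eq_add_minus_of_add_eq:
  assumes "u \<oplus> v = w \<oplus> z" "u \<in> carrier R" "v \<in> carrier R" "w \<in> carrier R" "z \<in> carrier R"
  shows "u = w \<oplus> (z \<ominus> v)"
proof -
  have "u = (u \<oplus> v) \<ominus> v" using assms(2,3) by (simp add: a_minus_def a_assoc r_neg)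
  also have "\<dots> = w \<oplus> (z \<ominus> v)" using assms by (simp add: a_minus_def a_assoc)
  finally show ?thesis .
qed

lemma ideal_sum_least: "ideal K R \<Longrightarrow> A \<subseteq> K \<Longrightarrow> B \<subseteq> K \<Longrightarrow> A <+>\<^bsub>R\<^esub> B \<subseteq> K"
  unfolding subset_iff set_add_mem_iff by (auto intro: ideal_add_closed)

lemma ideal_sum_upper:
  assumes "ideal A R" "ideal B R"
  shows "A \<subseteq> A <+>\<^bsub>R\<^esub> B" and "B \<subseteq> A <+>\<^bsub>R\<^esub> B"
proof -
  have "A \<union> B \<subseteq> Idl (A \<union> B)"
    by (rule genideal_self) (use assms ideal_subset_carrier in blast)
  then show "A \<subseteq> A <+>\<^bsub>R\<^esub> B" and "B \<subseteq> A <+>\<^bsub>R\<^esub> B"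
    using union_genideal[OF assms] by auto
qed

lemma ideal_sum_absorb:
  assumes "ideal A R" "ideal B R" "B \<subseteq> A"
  shows "A <+>\<^bsub>R\<^esub> B = A" and "B <+>\<^bsub>R\<^esub> A = A"
  using ideal_sum_upper[OF assms(1,2)] ideal_sum_upper[OF assms(2,1)]
    ideal_sum_least[OF assms(1) subset_refl assms(3)] ideal_sum_least[OF assms(1) assms(3) subset_refl]
  by (simp_all add: subset_antisym)

lemma ideal_sum_assoc:
  "A \<subseteq> carrier R \<Longrightarrow> B \<subseteq> carrier R \<Longrightarrow> C \<subseteq> carrier R \<Longrightarrow>
    (A <+>\<^bsub>R\<^esub> B) <+>\<^bsub>R\<^esub> C = A <+>\<^bsub>R\<^esub> (B <+>\<^bsub>R\<^esub> C)"
  by (simp add: set_add_def add.set_mult_assoc)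

lemma ideal_sum_idem: "ideal A R \<Longrightarrow> A <+>\<^bsub>R\<^esub> A = A"
  using ideal_sum_absorb by blast

lemma ideal_sum_left_absorb:
  assumes "ideal A R" "ideal B R"
  shows "A <+>\<^bsub>R\<^esub> (A <+>\<^bsub>R\<^esub> B) = A <+>\<^bsub>R\<^esub> B"
  using ideal_sum_assoc[of A A B] ideal_sum_idem[OF assms(1)] assms ideal_subset_carrier by metis

lemma ideal_sum_zero: "ideal A R \<Longrightarrow> A <+>\<^bsub>R\<^esub> {\<zero>} = A"
  using ideal_sum_absorb zeroideal ideal_zero_mem by blast

lemma ideal_prod_mono:
  assumes "ideal X' R" "ideal Y' R" "X \<subseteq> X'" "Y \<subseteq> Y'"
  shows "X \<cdot> Y \<subseteq> X' \<cdot> Y'"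
proof
  fix s assume "s \<in> X \<cdot> Y"
  then show "s \<in> X' \<cdot> Y'"
    by (induct s rule: ideal_prod.induct) (use assms in \<open>auto intro: ideal_prod.intros\<close>)
qed

lemma ideal_pow_is_ideal: "ideal X R \<Longrightarrow> ideal (ideal_pow R X k) R"
  by (induct k) (auto intro: oneideal ideal_prod_is_ideal)

lemma ideal_pow_one: "ideal X R \<Longrightarrow> ideal_pow R X 1 = X"
  by (simp add: ideal_prod_one)

lemma ideal_pow_Suc_subset: "ideal X R \<Longrightarrow> ideal_pow R X (Suc k) \<subseteq> ideal_pow R X k"
  using ideal_prod_inter[of X "ideal_pow R X k"] ideal_pow_is_ideal[of X k] by auto

lemma ideal_pow_antimono:
  assumes "ideal X R" "k \<le> j"
  shows "ideal_pow R X j \<subseteq> ideal_pow R X k"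
  using assms(2) by (induct j rule: dec_induct) (use ideal_pow_Suc_subset[OF assms(1)] in blast)+

lemma ideal_pow_mono:
  assumes "ideal X R" "ideal Y R" "X \<subseteq> Y"
  shows "ideal_pow R X k \<subseteq> ideal_pow R Y k"
proof (induct k)
  case (Suc k)
  then show ?case
    using ideal_prod_mono[OF assms(2) ideal_pow_is_ideal[OF assms(2)] assms(3)] by simp
qed simp

lemma ideal_pow_mem_Suc: "ideal X R \<Longrightarrow> x \<in> X \<Longrightarrow> f \<in> ideal_pow R X k \<Longrightarrow> x \<otimes> f \<in> ideal_pow R X (Suc k)"
  by (simp add: ideal_prod.prod)

end

context cring
begin

lemma ideal_pow_add:
  "ideal X R \<Longrightarrow> ideal_pow R X (a + b) = ideal_pow R X a \<cdot> ideal_pow R X b"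
proof (induct a)
  case 0
  then show ?case
    using ideal_prod_commute[OF oneideal ideal_pow_is_ideal] ideal_prod_one ideal_pow_is_ideal by simp
next
  case (Suc a)
  then show ?case using ideal_prod_assoc ideal_pow_is_ideal by simp
qed

lemma ideal_pow_mult: "ideal X R \<Longrightarrow> ideal_pow R X (a * b) = ideal_pow R (ideal_pow R X a) b"
  by (induct b) (simp_all add: ideal_pow_add)

lemma ideal_pow_sum_subset:
  assumes X: "ideal X R" and Y: "ideal Y R"
  shows "ideal_pow R (X <+>\<^bsub>R\<^esub> Y) j \<subseteq> ideal_pow R X j <+>\<^bsub>R\<^esub> Y"
proof (induct j)
  case 0
  show ?case using ideal_sum_upper(1)[OF oneideal Y] by simp
next
  case (Suc j)
  let ?XY = "X <+>\<^bsub>R\<^esub> Y" and ?Xj = "ideal_pow R X j"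
  have XY: "ideal ?XY R" and Xj: "ideal ?Xj R" using add_ideals[OF X Y] ideal_pow_is_ideal[OF X] .
  have "ideal_pow R ?XY (Suc j) \<subseteq> ?XY \<cdot> (?Xj <+>\<^bsub>R\<^esub> Y)"
    using ideal_prod_mono[OF XY add_ideals[OF Xj Y] _ Suc] by simp
  also have "\<dots> = (X \<cdot> ?Xj <+>\<^bsub>R\<^esub> Y \<cdot> ?Xj) <+>\<^bsub>R\<^esub> ?XY \<cdot> Y"
    using ideal_prod_distr[OF XY Xj Y] ideal_prod_distr(2)[OF Xj X Y] by simp
  also have "\<dots> \<subseteq> (ideal_pow R X (Suc j) <+>\<^bsub>R\<^esub> Y) <+>\<^bsub>R\<^esub> Y"
    using ideal_prod_inter[OF Y Xj] ideal_prod_inter[OF XY Y] by (intro set_add_mono) auto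
  also have "\<dots> = ideal_pow R X (Suc j) <+>\<^bsub>R\<^esub> Y"
    using ideal_sum_assoc[of "ideal_pow R X (Suc j)" Y Y] ideal_sum_idem[OF Y]
      ideal_subset_carrier[OF ideal_pow_is_ideal[OF X]] ideal_subset_carrier[OF Y]
    by (simp del: ideal_pow.simps)
  finally show ?case .
qed

lemma Units_mult_add_eq_solve:
  assumes eq: "c \<otimes> u \<oplus> t = d \<otimes> w \<oplus> t'" and c: "c \<in> Units R"
    and carr: "u \<in> carrier R" "t \<in> carrier R" "d \<in> carrier R" "w \<in> carrier R" "t' \<in> carrier R"
  shows "u = (inv c \<otimes> d) \<otimes> w \<oplus> inv c \<otimes> (t' \<ominus> t)"
proof -
  have cc: "c \<in> carrier R" "inv c \<in> carrier R" using Units_closed[OF c] Units_inv_closed[OF c] .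
  have cu: "c \<otimes> u = d \<otimes> w \<oplus> (t' \<ominus> t)" by (rule eq_add_minus_of_add_eq[OF eq]) (use carr cc in simp_all)
  have "u = inv c \<otimes> (c \<otimes> u)" using c carr(1) cc by (simp add: m_assoc[symmetric] Units_l_inv)
  also have "\<dots> = inv c \<otimes> (d \<otimes> w \<oplus> (t' \<ominus> t))" by (simp only: cu)
  also have "\<dots> = (inv c \<otimes> d) \<otimes> w \<oplus> inv c \<otimes> (t' \<ominus> t)"
    using carr cc by (simp add: r_distr m_assoc)
  finally show ?thesis .
qed

lemma genideal_of_ideal: "ideal I R \<Longrightarrow> Idl I = I"
  using genideal_minimal genideal_self ideal.Icarr by (metis subsetI subset_antisym)

lemma cgenideal_mem_iff: "p \<in> PIdl g \<longleftrightarrow> (\<exists>r\<in>carrier R. p = r \<otimes> g)"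
  unfolding cgenideal_def by blast

lemma ideal_prod_cgenideal:
  "a \<in> carrier R \<Longrightarrow> b \<in> carrier R \<Longrightarrow> (PIdl a) \<cdot> (PIdl b) = PIdl (a \<otimes> b)"
  using ideal_prod_eq_genideal[OF cgenideal_ideal cgenideal_ideal] cgenideal_prod genideal_of_ideal
    cgenideal_ideal by simp

lemma cgenideal_pow_subset:
  assumes a: "a \<in> carrier R"
  shows "ideal_pow R (PIdl a) k \<subseteq> PIdl (a [^] k)"
proof (induct k)
  case 0
  show ?case unfolding cgenideal_def by (auto intro!: exI)
next
  case (Suc k)
  have "ideal_pow R (PIdl a) (Suc k) \<subseteq> (PIdl a) \<cdot> (PIdl (a [^] k))"
    using ideal_prod_mono[OF cgenideal_ideal cgenideal_ideal _ Suc] a by simp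
  also have "\<dots> = PIdl (a [^] Suc k)"
    using ideal_prod_cgenideal a by (simp add: nat_pow_Suc m_comm)
  finally show ?case .
qed

end

context cring
begin

lemma genideal_empty: "Idl {} = {\<zero>}"
  using genideal_minimal[OF zeroideal] ideal_zero_mem[OF genideal_ideal[of "{}"]] by auto

lemma genideal_insert:
  assumes g: "g \<in> carrier R" and G: "G \<subseteq> carrier R"
  shows "Idl (insert g G) = PIdl g <+>\<^bsub>R\<^esub> Idl G"
proof
  have Pg: "ideal (PIdl g) R" and IG: "ideal (Idl G) R" using cgenideal_ideal[OF g] genideal_ideal[OF G] .
  have gG: "insert g G \<subseteq> carrier R" using g G by simp
  show "Idl (insert g G) \<subseteq> PIdl g <+>\<^bsub>R\<^esub> Idl G"
    using genideal_minimal[OF add_ideals[OF Pg IG]] cgenideal_self[OF g] genideal_self[OF G]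
      ideal_sum_upper[OF Pg IG] by blast
  have II: "ideal (Idl (insert g G)) R" by (rule genideal_ideal[OF gG])
  have "PIdl g \<subseteq> Idl (insert g G)" using cgenideal_minimal[OF II] genideal_self[OF gG] by blast
  moreover have "Idl G \<subseteq> Idl (insert g G)" using genideal_minimal[OF II] genideal_self[OF gG] by blast
  ultimately show "PIdl g <+>\<^bsub>R\<^esub> Idl G \<subseteq> Idl (insert g G)" by (rule ideal_sum_least[OF II])
qed

lemma ideal_prod_cgenideal_obtain:
  assumes J: "ideal J R" and a: "a \<in> carrier R" and z: "z \<in> J \<cdot> (PIdl a)"
  obtains x where "x \<in> J" "z = x \<otimes> a"
proof -
  from z have "\<exists>x\<in>J. z = x \<otimes> a"
  proof (induct z rule: ideal_prod.induct)
    case (prod i j)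
    obtain r where r: "r \<in> carrier R" "j = r \<otimes> a" using prod(2) cgenideal_mem_iff by blast
    have "i \<otimes> j = (i \<otimes> r) \<otimes> a" using r a ideal.Icarr[OF J prod(1)] by (simp add: m_assoc)
    then show ?case using ideal.I_r_closed[OF J prod(1) r(1)] by blast
  next
    case (sum s1 s2)
    then obtain x1 x2 where "x1 \<in> J" "s1 = x1 \<otimes> a" "x2 \<in> J" "s2 = x2 \<otimes> a" by blast
    moreover then have "s1 \<oplus> s2 = (x1 \<oplus> x2) \<otimes> a" using a ideal.Icarr[OF J] by (simp add: l_distr)
    ultimately show ?case using ideal_add_closed[OF J] by blast
  qed
  then show ?thesis using that by blast
qed

end

section \<open>Length of a quotient of ideals\<close>

definition ideal_chain :: "('a, 'b) ring_scheme \<Rightarrow> 'a set \<Rightarrow> 'a set \<Rightarrow> nat \<Rightarrow> (nat \<Rightarrow> 'a set) \<Rightarrow> bool"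
  where "ideal_chain R B A r C \<longleftrightarrow>
    C 0 = B \<and> C r = A \<and> (\<forall>i\<le>r. ideal (C i) R) \<and> (\<forall>i<r. C i \<subset> C (Suc i))"

lemma module_length_chains: "module_length R B A = Sup {enat r | r. \<exists>C. ideal_chain R B A r C}"
  unfolding module_length_def ideal_chain_def by simp

lemma ideal_chain_length_le: "ideal_chain R B A r C \<Longrightarrow> enat r \<le> module_length R B A"
  unfolding module_length_chains by (rule Sup_upper) blast

lemma module_length_leI:
  "(\<And>r C. ideal_chain R B A r C \<Longrightarrow> enat r \<le> K) \<Longrightarrow> module_length R B A \<le> K"
  unfolding module_length_chains by (rule Sup_least) blast

lemma enat_le_by_finite:
  fixes x y :: enat
  assumes "\<And>k. enat k \<le> x \<Longrightarrow> enat k \<le> y"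
  shows "x \<le> y"
proof (cases y)
  case (enat m)
  show ?thesis
  proof (rule ccontr)
    assume "\<not> x \<le> y"
    then have "enat (Suc m) \<le> x" using enat by (cases x) auto
    then show False using assms[of "Suc m"] enat by simp
  qed
qed simp

lemma enat_le_Sup_obtain:
  fixes S :: "enat set"
  assumes "enat k \<le> Sup S" "S \<noteq> {}"
  obtains s where "s \<in> S" "enat k \<le> s"
proof (cases k)
  case 0
  then show ?thesis using that assms(2) by (auto simp: zero_enat_def[symmetric])
next
  case (Suc j)
  then have "enat j < Sup S" using assms(1) by (simp add: Suc_ile_eq)
  then obtain s where "s \<in> S" "enat j < s" by (auto simp: less_Sup_iff)
  then show ?thesis using that Suc by (simp add: Suc_ile_eq)
qed

lemma enat_le_add_obtain:
  fixes a b :: enat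
  assumes "enat k \<le> a + b"
  obtains k1 k2 where "k = k1 + k2" "enat k1 \<le> a" "enat k2 \<le> b"
proof (cases a)
  case (enat p)
  show ?thesis
  proof (cases b)
    case (enat q)
    then have "k = min k p + (k - min k p)" "enat (min k p) \<le> a" "enat (k - min k p) \<le> b"
      using assms \<open>a = enat p\<close> by auto
    then show ?thesis by (rule that)
  qed (use that[of 0 k] in \<open>simp add: zero_enat_def[symmetric]\<close>)
qed (use that[of k 0] in \<open>simp add: zero_enat_def[symmetric]\<close>)

lemma ideal_chain_mono:
  assumes "ideal_chain R B A r C" "i \<le> j" "j \<le> r"
  shows "C i \<subseteq> C j"
  using assms(2,3)
proof (induct j)
  case (Suc j)
  moreover have "C j \<subset> C (Suc j)" using assms(1) Suc(3) unfolding ideal_chain_def by simp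
  ultimately show ?case by (cases "i = Suc j") auto
qed simp

lemma ideal_chain_strict:
  assumes "ideal_chain R B A r C" "i < j" "j \<le> r"
  shows "C i \<subset> C j"
proof -
  obtain j' where j': "j = Suc j'" using assms(2) by (cases j) auto
  have "C i \<subseteq> C j'" using ideal_chain_mono[OF assms(1)] assms j' by simp
  moreover have "C j' \<subset> C (Suc j')" using assms(1,3) j' unfolding ideal_chain_def by simp
  ultimately show ?thesis using j' by auto
qed

lemma ideal_chain_two_step:
  "ideal B R \<Longrightarrow> ideal A R \<Longrightarrow> B \<subset> A \<Longrightarrow> ideal_chain R B A 1 (\<lambda>i. if i = 0 then B else A)"
  unfolding ideal_chain_def by (auto simp: le_Suc_eq)

lemma ideal_chain_obtain:
  assumes "enat k \<le> module_length R B A" "ideal B R" "ideal A R" "B \<subseteq> A"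
  obtains r C where "k \<le> r" "ideal_chain R B A r C"
proof -
  have "ideal_chain R B B 0 (\<lambda>_. B)" using assms(2) unfolding ideal_chain_def by simp
  then have "{enat r | r. \<exists>C. ideal_chain R B A r C} \<noteq> {}"
    using ideal_chain_two_step[OF assms(2,3)] assms(4) by (cases "B = A") auto
  then show ?thesis
    using enat_le_Sup_obtain[OF assms(1)[unfolded module_length_chains]] that by force
qed

lemma module_length_self: "module_length R B B = 0"
proof -
  have "module_length R B B \<le> 0"
  proof (rule module_length_leI)
    fix r C assume c: "ideal_chain R B B r C"
    show "enat r \<le> 0"
      using ideal_chain_strict[OF c, of 0 r] c unfolding ideal_chain_def by (cases r) (auto simp: zero_enat_def)
  qed
  then show ?thesis by simp
qed

lemma module_length_ge_one: "ideal B R \<Longrightarrow> ideal A R \<Longrightarrow> B \<subset> A \<Longrightarrow> 1 \<le> module_length R B A"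
  using ideal_chain_length_le[OF ideal_chain_two_step] by (simp add: one_enat_def)

lemma module_length_le_one:
  assumes cover: "\<And>X. ideal X R \<Longrightarrow> B \<subseteq> X \<Longrightarrow> X \<subseteq> A \<Longrightarrow> X = B \<or> X = A"
  shows "module_length R B A \<le> 1"
proof (rule module_length_leI)
  fix r C assume c: "ideal_chain R B A r C"
  show "enat r \<le> 1"
  proof (rule ccontr)
    assume "\<not> enat r \<le> 1"
    then have r: "2 \<le> r" by (simp add: one_enat_def)
    have "C 0 \<subset> C 1" "C 1 \<subset> C r" using ideal_chain_strict[OF c] r by auto
    moreover have "ideal (C 1) R" using c r unfolding ideal_chain_def by auto
    ultimately show False using cover[of "C 1"] c unfolding ideal_chain_def by auto
  qed
qed

lemma module_length_one_no_intermediate: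
  assumes "module_length R B A = 1" "ideal B R" "ideal A R" "ideal X R" "B \<subset> X" "X \<subset> A"
  shows False
proof -
  have "ideal_chain R B A 2 (\<lambda>i. if i = 0 then B else if i = 1 then X else A)"
    using assms unfolding ideal_chain_def by (auto simp: numeral_2_eq_2 le_Suc_eq less_Suc_eq)
  from ideal_chain_length_le[OF this] assms(1) show False by (simp add: one_enat_def)
qed

lemma ideal_chain_append:
  assumes c1: "ideal_chain R B C r1 C1" and c2: "ideal_chain R C A r2 C2"
  shows "ideal_chain R B A (r1 + r2) (\<lambda>i. if i \<le> r1 then C1 i else C2 (i - r1))"
  unfolding ideal_chain_def
proof (intro conjI allI impI)
  fix i assume i: "i < r1 + r2"
  show "(if i \<le> r1 then C1 i else C2 (i - r1)) \<subset> (if Suc i \<le> r1 then C1 (Suc i) else C2 (Suc i - r1))"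
  proof (cases "Suc i \<le> r1")
    case False
    then have "r1 \<le> i" and Suc_diff: "Suc i - r1 = Suc (i - r1)" by auto
    then have "C2 (i - r1) \<subset> C2 (Suc (i - r1))"
      and "(if i \<le> r1 then C1 i else C2 (i - r1)) = C2 (i - r1)"
      using c1 c2 i unfolding ideal_chain_def by auto
    then show ?thesis using False Suc_diff by simp
  qed (use c1 in \<open>auto simp: ideal_chain_def\<close>)
qed (use c1 c2 in \<open>auto simp: ideal_chain_def\<close>)

lemma module_length_superadditive:
  assumes "ideal B R" "ideal C R" "ideal A R" "B \<subseteq> C" "C \<subseteq> A"
  shows "module_length R B C + module_length R C A \<le> module_length R B A"
proof (rule enat_le_by_finite)
  fix k assume "enat k \<le> module_length R B C + module_length R C A"
  then obtain k1 k2 where k: "k = k1 + k2" "enat k1 \<le> module_length R B C" "enat k2 \<le> module_length R C A"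
    by (rule enat_le_add_obtain)
  obtain r1 C1 where 1: "k1 \<le> r1" "ideal_chain R B C r1 C1" using ideal_chain_obtain[OF k(2) assms(1,2,4)] .
  obtain r2 C2 where 2: "k2 \<le> r2" "ideal_chain R C A r2 C2" using ideal_chain_obtain[OF k(3) assms(2,3,5)] .
  have "enat (r1 + r2) \<le> module_length R B A" by (rule ideal_chain_length_le[OF ideal_chain_append[OF 1(2) 2(2)]])
  then show "enat k \<le> module_length R B A" using k 1 2 by (meson add_mono enat_ord_simps(1) order_trans)
qed

lemma ideal_chain_of_increasing:
  assumes "\<forall>i\<le>t. ideal (E i) R" "\<forall>i<t. E i \<subseteq> E (Suc i)"
  shows "\<exists>C. ideal_chain R (E 0) (E t) (card {i. i < t \<and> E i \<noteq> E (Suc i)}) C"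
  using assms
proof (induct t)
  case 0
  then show ?case unfolding ideal_chain_def by auto
next
  case (Suc t)
  let ?k = "card {i. i < t \<and> E i \<noteq> E (Suc i)}"
  obtain C where C: "ideal_chain R (E 0) (E t) ?k C" using Suc by auto
  show ?case
  proof (cases "E t = E (Suc t)")
    case True
    then have "{i. i < Suc t \<and> E i \<noteq> E (Suc i)} = {i. i < t \<and> E i \<noteq> E (Suc i)}"
      using less_Suc_eq by auto
    then show ?thesis using C True by auto
  next
    case False
    then have "{i. i < Suc t \<and> E i \<noteq> E (Suc i)} = insert t {i. i < t \<and> E i \<noteq> E (Suc i)}"
      using less_Suc_eq by auto
    then have card: "card {i. i < Suc t \<and> E i \<noteq> E (Suc i)} = Suc ?k" by simp
    have "ideal_chain R (E 0) (E (Suc t)) (Suc ?k) (C(Suc ?k := E (Suc t)))"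
      using C Suc(2,3) False unfolding ideal_chain_def
      by (auto simp: le_Suc_eq less_Suc_eq intro: psubset_subset_trans)
    then show ?thesis using card by metis
  qed
qed

lemma module_length_ge_card_steps:
  assumes "\<forall>i\<le>t. ideal (E i) R" "\<forall>i<t. E i \<subseteq> E (Suc i)"
  shows "enat (card {i. i < t \<and> E i \<noteq> E (Suc i)}) \<le> module_length R (E 0) (E t)"
  using ideal_chain_of_increasing[OF assms] ideal_chain_length_le by blast

context ring
begin

lemma ideal_modular_eq:
  assumes "ideal X R" "ideal Y R" "ideal C R" "X \<subseteq> Y"
    and "X \<inter> C = Y \<inter> C" "X <+>\<^bsub>R\<^esub> C = Y <+>\<^bsub>R\<^esub> C"
  shows "X = Y"
proof (rule equalityI[OF assms(4)], rule subsetI)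
  fix y assume y: "y \<in> Y"
  then have "y \<in> X <+>\<^bsub>R\<^esub> C" using ideal_sum_upper(1)[OF assms(2,3)] assms(6) by blast
  then obtain x c where xc: "x \<in> X" "c \<in> C" "y = x \<oplus> c" by (rule set_add_memE)
  have "x \<in> carrier R" "c \<in> carrier R" using ideal.Icarr[OF assms(1) xc(1)] ideal.Icarr[OF assms(3) xc(2)] .
  then have "c = \<ominus> x \<oplus> y" using xc by (simp add: a_assoc[symmetric] l_neg)
  moreover have "\<ominus> x \<in> Y" using xc(1) assms(4) ideal_uminus_closed[OF assms(2)] by blast
  ultimately have "c \<in> X" using y xc(2) assms(5) ideal_add_closed[OF assms(2)] by blast
  then show "y \<in> X" using xc ideal_add_closed[OF assms(1)] by simp
qed

lemma module_length_subadditive: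
  assumes B: "ideal B R" and C: "ideal C R" and A: "ideal A R" and "B \<subseteq> C" "C \<subseteq> A"
  shows "module_length R B A \<le> module_length R B C + module_length R C A"
proof (rule module_length_leI)
  fix r D assume D: "ideal_chain R B A r D"
  define E1 where "E1 i = D i \<inter> C" for i
  define E2 where "E2 i = D i <+>\<^bsub>R\<^esub> C" for i
  let ?S1 = "{i. i < r \<and> E1 i \<noteq> E1 (Suc i)}" and ?S2 = "{i. i < r \<and> E2 i \<noteq> E2 (Suc i)}"
  have Di: "\<forall>i\<le>r. ideal (D i) R" and Dm: "\<forall>i<r. D i \<subseteq> D (Suc i)"
    and D0: "D 0 = B" and Dr: "D r = A"
    using D unfolding ideal_chain_def by auto
  have "\<forall>i\<le>r. ideal (E1 i) R" "\<forall>i<r. E1 i \<subseteq> E1 (Suc i)"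
    unfolding E1_def using Di Dm i_intersect[OF _ C] by auto
  moreover have "E1 0 = B" "E1 r = C" using D0 Dr assms(4,5) unfolding E1_def by auto
  ultimately have S1: "enat (card ?S1) \<le> module_length R B C"
    using module_length_ge_card_steps[of r E1 R] by simp
  have "\<forall>i\<le>r. ideal (E2 i) R" "\<forall>i<r. E2 i \<subseteq> E2 (Suc i)"
    unfolding E2_def using Di Dm add_ideals[OF _ C] set_add_mono[OF _ subset_refl, of _ _ R C] by auto
  moreover have "E2 0 = C" "E2 r = A"
    using D0 Dr ideal_sum_absorb(2)[OF C B assms(4)] ideal_sum_absorb(1)[OF A C assms(5)]
    unfolding E2_def by auto
  ultimately have S2: "enat (card ?S2) \<le> module_length R C A"
    using module_length_ge_card_steps[of r E2 R] by simp
  have "{..<r} \<subseteq> ?S1 \<union> ?S2"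
  proof
    fix i assume i: "i \<in> {..<r}"
    have "D i \<noteq> D (Suc i)" using D i unfolding ideal_chain_def by auto
    then show "i \<in> ?S1 \<union> ?S2"
      using ideal_modular_eq[of "D i" "D (Suc i)" C] Di Dm i C unfolding E1_def E2_def by auto
  qed
  then have "r \<le> card ?S1 + card ?S2"
    using card_mono[of "?S1 \<union> ?S2" "{..<r}"] card_Un_le[of ?S1 ?S2] by simp
  then have "enat r \<le> enat (card ?S1) + enat (card ?S2)" by simp
  also have "\<dots> \<le> module_length R B C + module_length R C A" using S1 S2 by (rule add_mono)
  finally show "enat r \<le> module_length R B C + module_length R C A" .
qed

lemma module_length_add:
  assumes "ideal B R" "ideal C R" "ideal A R" "B \<subseteq> C" "C \<subseteq> A"
  shows "module_length R B A = module_length R B C + module_length R C A"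
  using module_length_subadditive[OF assms] module_length_superadditive[OF assms] by simp

lemma module_length_telescope:
  assumes "\<forall>i\<le>t. ideal (X i) R" "\<forall>i<t. X (Suc i) \<subseteq> X i"
  shows "module_length R (X t) (X 0) = (\<Sum>i<t. module_length R (X (Suc i)) (X i))"
proof -
  have "X t \<subseteq> X 0 \<and> ?thesis"
    using assms
  proof (induct t)
    case (Suc t)
    then have "X t \<subseteq> X 0" "module_length R (X t) (X 0) = (\<Sum>i<t. module_length R (X (Suc i)) (X i))"
      by auto
    moreover have "module_length R (X (Suc t)) (X 0)
        = module_length R (X (Suc t)) (X t) + module_length R (X t) (X 0)"
      using Suc(2,3) calculation(1) by (intro module_length_add) auto
    ultimately show ?case using Suc(3) by (auto simp: add.commute)
  qed (simp add: module_length_self)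
  then show ?thesis ..
qed

end

section \<open>Local rings\<close>

locale local_cring = cring +
  fixes m
  assumes m_ideal: "ideal m R"
    and one_not_in_m: "\<one> \<notin> m"
    and not_in_m_unit: "x \<in> carrier R \<Longrightarrow> x \<notin> m \<Longrightarrow> x \<in> Units R"
begin

lemma m_carrier: "x \<in> m \<Longrightarrow> x \<in> carrier R"
  by (rule ideal.Icarr[OF m_ideal])

lemma one_minus_m_unit:
  assumes "x \<in> m"
  shows "\<one> \<ominus> x \<in> Units R"
proof -
  have x: "x \<in> carrier R" using m_carrier[OF assms] .
  have "(\<one> \<ominus> x) \<oplus> x = \<one>" using x by (simp add: a_minus_def a_assoc l_neg)
  then have "\<one> \<ominus> x \<notin> m" using assms one_not_in_m ideal_add_closed[OF m_ideal] by metis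
  then show ?thesis using not_in_m_unit x by simp
qed

lemma mem_ideal_of_minus_m_mult:
  assumes K: "ideal K R" and a: "a \<in> carrier R" and x: "x \<in> m" and k: "a \<ominus> x \<otimes> a \<in> K"
  shows "a \<in> K"
proof -
  define u where "u = \<one> \<ominus> x"
  have u: "u \<in> Units R" unfolding u_def by (rule one_minus_m_unit[OF x])
  have "u \<otimes> a = a \<ominus> x \<otimes> a" unfolding u_def using m_carrier[OF x] a by (simp add: a_minus_def l_distr l_minus)
  then have "inv u \<otimes> (u \<otimes> a) \<in> K" using k ideal.I_l_closed[OF K] u by simp
  moreover have "inv u \<otimes> (u \<otimes> a) = a"
    using u a by (simp add: m_assoc[symmetric] Units_l_inv Units_closed Units_inv_closed)
  ultimately show ?thesis by simp
qed

lemma module_length_cgenideal_le_one: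
  assumes B: "ideal B R" and g: "g \<in> carrier R" and mg: "\<And>x. x \<in> m \<Longrightarrow> x \<otimes> g \<in> B"
  shows "module_length R B (PIdl g <+>\<^bsub>R\<^esub> B) \<le> 1"
proof (rule module_length_le_one)
  have Pg: "ideal (PIdl g) R" by (rule cgenideal_ideal[OF g])
  fix X assume X: "ideal X R" "B \<subseteq> X" "X \<subseteq> PIdl g <+>\<^bsub>R\<^esub> B"
  show "X = B \<or> X = PIdl g <+>\<^bsub>R\<^esub> B"
  proof (rule disjCI)
    assume "X \<noteq> PIdl g <+>\<^bsub>R\<^esub> B"
    then have "g \<notin> X"
      using cgenideal_minimal[OF X(1)] ideal_sum_least[OF X(1)] X(2,3) by blast
    show "X = B"
    proof (rule ccontr)
      assume "X \<noteq> B"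
      then obtain x where x: "x \<in> X" "x \<notin> B" using X(2) by blast
      then obtain p b where pb: "p \<in> PIdl g" "b \<in> B" "x = p \<oplus> b" using X(3) by (blast elim: set_add_memE)
      obtain r where r: "r \<in> carrier R" "p = r \<otimes> g" using pb(1) cgenideal_mem_iff by blast
      have bc: "b \<in> carrier R" and pc: "p \<in> carrier R" using ideal.Icarr[OF B pb(2)] r g by simp_all
      show False
      proof (cases "r \<in> m")
        case True
        then show False using mg r pb x(2) ideal_add_closed[OF B] by simp
      next
        case False
        then have u: "r \<in> Units R" using not_in_m_unit r by simp
        have "p = x \<oplus> \<ominus> b" using pb pc bc by (simp add: a_assoc r_neg)
        then have "p \<in> X" using x(1) X(2) pb(2) ideal_add_closed[OF X(1)] ideal_uminus_closed[OF X(1)] by blast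
        moreover have "g = inv r \<otimes> p" using r g u by (simp add: m_assoc[symmetric] Units_l_inv)
        ultimately show False using ideal.I_l_closed[OF X(1)] u \<open>g \<notin> X\<close> by simp
      qed
    qed
  qed
qed

lemma module_length_genideal_le_card:
  assumes "finite G" "G \<subseteq> carrier R" "ideal B R" "\<And>g x. g \<in> G \<Longrightarrow> x \<in> m \<Longrightarrow> x \<otimes> g \<in> B"
  shows "module_length R B (Idl G <+>\<^bsub>R\<^esub> B) \<le> enat (card G)"
  using assms
proof (induct G arbitrary: B rule: finite_induct)
  case empty
  then show ?case
    using ideal_sum_absorb(2)[OF empty(2) zeroideal] ideal_zero_mem module_length_self
    by (simp add: genideal_empty zero_enat_def[symmetric])
next
  case (insert g G)
  have g: "g \<in> carrier R" and G: "G \<subseteq> carrier R" using insert by auto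
  have Pg: "ideal (PIdl g) R" and IG: "ideal (Idl G) R" using cgenideal_ideal[OF g] genideal_ideal[OF G] .
  define B' where "B' = PIdl g <+>\<^bsub>R\<^esub> B"
  have B': "ideal B' R" and BB': "B \<subseteq> B'"
    unfolding B'_def using add_ideals[OF Pg insert(5)] ideal_sum_upper(2)[OF Pg insert(5)] .
  have eq: "Idl (insert g G) <+>\<^bsub>R\<^esub> B = Idl G <+>\<^bsub>R\<^esub> B'"
    unfolding genideal_insert[OF g G] B'_def
    using ideal_sum_assoc[of "PIdl g" "Idl G" B] ideal_sum_assoc[of "Idl G" "PIdl g" B]
      set_add_comm[of "PIdl g" "Idl G"] Pg IG insert(5) ideal_subset_carrier by simp
  have "module_length R B (Idl G <+>\<^bsub>R\<^esub> B') = module_length R B B' + module_length R B' (Idl G <+>\<^bsub>R\<^esub> B')"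
    using module_length_add[OF insert(5) B' add_ideals[OF IG B'] BB' ideal_sum_upper(2)[OF IG B']] .
  also have "module_length R B B' \<le> 1"
    unfolding B'_def by (rule module_length_cgenideal_le_one[OF insert(5) g]) (use insert(6) in simp)
  also have "module_length R B' (Idl G <+>\<^bsub>R\<^esub> B') \<le> enat (card G)"
    by (rule insert(3)[OF G B']) (use insert(6) BB' in blast)
  finally show ?case using eq insert(1,2) by (simp add: one_enat_def add_right_mono)
qed

lemma nakayama_relative:
  assumes "finite A" "A \<subseteq> carrier R" "ideal K R"
    "K <+>\<^bsub>R\<^esub> Idl A \<subseteq> K <+>\<^bsub>R\<^esub> m \<cdot> (K <+>\<^bsub>R\<^esub> Idl A)"
  shows "K <+>\<^bsub>R\<^esub> Idl A = K"
  using assms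
proof (induct A arbitrary: K rule: finite_induct)
  case empty
  then show ?case using ideal_sum_absorb(1)[OF empty(2) zeroideal] ideal_zero_mem by (simp add: genideal_empty)
next
  case (insert a A)
  have a: "a \<in> carrier R" and A: "A \<subseteq> carrier R" and K: "ideal K R" using insert by auto
  have Pa: "ideal (PIdl a) R" and IA: "ideal (Idl A) R" using cgenideal_ideal[OF a] genideal_ideal[OF A] .
  define K' where "K' = K <+>\<^bsub>R\<^esub> PIdl a"
  have K': "ideal K' R" and KK': "K \<subseteq> K'"
    unfolding K'_def using add_ideals[OF K Pa] ideal_sum_upper(1)[OF K Pa] .
  have eqM: "K <+>\<^bsub>R\<^esub> Idl (insert a A) = K' <+>\<^bsub>R\<^esub> Idl A"
    unfolding genideal_insert[OF a A] K'_def
    using ideal_sum_assoc[of K "PIdl a" "Idl A"] K Pa IA ideal_subset_carrier by simp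
  have "K' <+>\<^bsub>R\<^esub> Idl A \<subseteq> K' <+>\<^bsub>R\<^esub> m \<cdot> (K' <+>\<^bsub>R\<^esub> Idl A)"
    using insert(6) eqM set_add_mono[OF KK' subset_refl, of R "m \<cdot> (K' <+>\<^bsub>R\<^esub> Idl A)"] by auto
  then have MK': "K' <+>\<^bsub>R\<^esub> Idl A = K'" by (rule insert(3)[OF A K'])
  have "a \<in> K'" using cgenideal_self[OF a] ideal_sum_upper(2)[OF K Pa] unfolding K'_def by blast
  then have "a \<in> K <+>\<^bsub>R\<^esub> m \<cdot> K'" using insert(6) eqM MK' by auto
  then obtain k z where kz: "k \<in> K" "z \<in> m \<cdot> K'" "a = k \<oplus> z" by (rule set_add_memE)
  moreover have "m \<cdot> K' = m \<cdot> K <+>\<^bsub>R\<^esub> m \<cdot> (PIdl a)"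
    unfolding K'_def by (rule ideal_prod_distr(1)[OF m_ideal K Pa])
  ultimately obtain z1 z2 where z: "z1 \<in> m \<cdot> K" "z2 \<in> m \<cdot> (PIdl a)" "z = z1 \<oplus> z2"
    by (auto elim: set_add_memE)
  obtain x where x: "x \<in> m" "z2 = x \<otimes> a" using ideal_prod_cgenideal_obtain[OF m_ideal a z(2)] .
  have z1: "z1 \<in> K" using z(1) ideal_prod_inter[OF m_ideal K] by blast
  have carr: "k \<in> carrier R" "z1 \<in> carrier R" "x \<otimes> a \<in> carrier R"
    using ideal.Icarr[OF K kz(1)] ideal.Icarr[OF K z1] m_carrier[OF x(1)] a by auto
  have "a = (k \<oplus> z1) \<oplus> x \<otimes> a" using kz(3) z(3) x(2) carr by (simp add: a_assoc)
  then have "a \<ominus> x \<otimes> a = ((k \<oplus> z1) \<oplus> x \<otimes> a) \<ominus> x \<otimes> a" by (rule arg_cong)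
  also have "\<dots> = k \<oplus> z1" using carr by (simp add: a_minus_def a_assoc r_neg)
  finally have "a \<ominus> x \<otimes> a = k \<oplus> z1" .
  then have "a \<in> K" using mem_ideal_of_minus_m_mult[OF K a x(1)] ideal_add_closed[OF K kz(1) z1] by simp
  then have "K' = K" unfolding K'_def using ideal_sum_absorb(1)[OF K Pa] cgenideal_minimal[OF K] by simp
  then show ?case using eqM MK' by simp
qed

lemma nakayama:
  assumes "finite A" "A \<subseteq> carrier R" "Idl A \<subseteq> m \<cdot> (Idl A)"
  shows "Idl A = {\<zero>}"
proof -
  have IA: "ideal (Idl A) R" by (rule genideal_ideal[OF assms(2)])
  have mIA: "ideal (m \<cdot> (Idl A)) R" by (rule ideal_prod_is_ideal[OF m_ideal IA])
  have "{\<zero>} <+>\<^bsub>R\<^esub> Idl A = {\<zero>}"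
    by (rule nakayama_relative[OF assms(1,2) zeroideal])
      (use assms(3) ideal_sum_absorb(2)[OF IA zeroideal] ideal_sum_absorb(2)[OF mIA zeroideal]
        ideal_zero_mem[OF IA] ideal_zero_mem[OF mIA] in simp)
  then show ?thesis using ideal_sum_absorb(2)[OF IA zeroideal] ideal_zero_mem[OF IA] by simp
qed

end

section \<open>Powers of the maximal ideal\<close>

context local_cring
begin

abbreviation mpow :: "nat \<Rightarrow> 'a set" where "mpow k \<equiv> ideal_pow R m k"

lemma mpow_ideal: "ideal (mpow k) R"
  by (rule ideal_pow_is_ideal[OF m_ideal])

lemma mpow_carrier: "x \<in> mpow k \<Longrightarrow> x \<in> carrier R"
  by (rule ideal.Icarr[OF mpow_ideal])

lemma mpow_Suc_subset: "mpow (Suc k) \<subseteq> mpow k"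
  by (rule ideal_pow_Suc_subset[OF m_ideal])

lemma mpow_antimono: "k \<le> j \<Longrightarrow> mpow j \<subseteq> mpow k"
  by (rule ideal_pow_antimono[OF m_ideal])

lemma mpow_mult_mem:
  assumes "x \<in> m" "f \<in> mpow k"
  shows "x \<otimes> f \<in> mpow (Suc k)" and "f \<otimes> x \<in> mpow (Suc k)"
  using ideal_pow_mem_Suc[OF m_ideal assms] m_comm[OF m_carrier mpow_carrier] assms by simp_all

lemma mpow_zero_beyond: "mpow N = {\<zero>} \<Longrightarrow> N \<le> k \<Longrightarrow> mpow k = {\<zero>}"
  using mpow_antimono ideal_zero_mem[OF mpow_ideal] by blast

lemma mpow_Suc_neq:
  assumes N: "mpow N = {\<zero>}" and nz: "mpow k \<noteq> {\<zero>}"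
  shows "mpow (Suc k) \<noteq> mpow k"
proof
  assume eq: "mpow (Suc k) = mpow k"
  have "mpow (k + j) = mpow k" for j
    by (induct j) (use eq in simp_all)
  then show False using mpow_zero_beyond[OF N, of "k + N"] nz by simp
qed

lemma mpow_subset_cgenideal_sum:
  assumes a: "a \<in> carrier R" and dec: "mpow k = PIdl a <+>\<^bsub>R\<^esub> mpow (Suc k)"
  shows "mpow k \<subseteq> PIdl a <+>\<^bsub>R\<^esub> mpow (Suc k + t)"
proof (induct t)
  case 0
  then show ?case using dec by (simp del: ideal_pow.simps)
next
  case (Suc t)
  have Pa: "ideal (PIdl a) R" by (rule cgenideal_ideal[OF a])
  have "mpow (Suc k) \<subseteq> m \<cdot> (PIdl a <+>\<^bsub>R\<^esub> mpow (Suc k + t))"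
    using ideal_prod_mono[OF m_ideal add_ideals[OF Pa mpow_ideal] subset_refl Suc] by simp
  also have "\<dots> = m \<cdot> (PIdl a) <+>\<^bsub>R\<^esub> m \<cdot> mpow (Suc k + t)"
    by (rule ideal_prod_distr(1)[OF m_ideal Pa mpow_ideal])
  also have "\<dots> \<subseteq> PIdl a <+>\<^bsub>R\<^esub> mpow (Suc k + Suc t)"
    using ideal_prod_inter[OF m_ideal Pa] by (intro set_add_mono) auto
  finally have "PIdl a <+>\<^bsub>R\<^esub> mpow (Suc k) \<subseteq> PIdl a <+>\<^bsub>R\<^esub> (PIdl a <+>\<^bsub>R\<^esub> mpow (Suc k + Suc t))"
    by (rule set_add_mono[OF subset_refl])
  then show ?case using dec ideal_sum_left_absorb[OF Pa mpow_ideal] by (simp del: ideal_pow.simps)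
qed

lemma mpow_eq_cgenideal:
  assumes N: "mpow N = {\<zero>}" and a: "a \<in> mpow k" and dec: "mpow k = PIdl a <+>\<^bsub>R\<^esub> mpow (Suc k)"
  shows "mpow k = PIdl a"
proof
  have "mpow k \<subseteq> PIdl a <+>\<^bsub>R\<^esub> mpow (Suc k + N)"
    by (rule mpow_subset_cgenideal_sum[OF mpow_carrier[OF a] dec])
  then show "mpow k \<subseteq> PIdl a"
    using mpow_zero_beyond[OF N, of "Suc k + N"] ideal_sum_zero[OF cgenideal_ideal[OF mpow_carrier[OF a]]]
    by simp
  show "PIdl a \<subseteq> mpow k" by (rule cgenideal_minimal[OF mpow_ideal a])
qed

lemma mpow_principal_of_length_one:
  assumes N: "mpow N = {\<zero>}" and len: "module_length R (mpow (Suc k)) (mpow k) = 1"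
  obtains a where "a \<in> carrier R" "mpow k = PIdl a"
proof -
  have "mpow (Suc k) \<noteq> mpow k"
    using len module_length_self[of R "mpow k"] by (metis one_neq_zero)
  then obtain a where a: "a \<in> mpow k" "a \<notin> mpow (Suc k)" using mpow_Suc_subset by blast
  have Pa: "ideal (PIdl a) R" by (rule cgenideal_ideal[OF mpow_carrier[OF a(1)]])
  let ?X = "PIdl a <+>\<^bsub>R\<^esub> mpow (Suc k)"
  have "mpow (Suc k) \<subseteq> ?X" "a \<in> ?X"
    using ideal_sum_upper[OF Pa mpow_ideal[of "Suc k"]] cgenideal_self[OF mpow_carrier[OF a(1)]] by blast+
  moreover have "?X \<subseteq> mpow k"
    by (rule ideal_sum_least[OF mpow_ideal cgenideal_minimal[OF mpow_ideal a(1)] mpow_Suc_subset])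
  ultimately have "mpow k = ?X"
    using module_length_one_no_intermediate[OF len mpow_ideal mpow_ideal add_ideals[OF Pa mpow_ideal]] a(2)
    by blast
  then show ?thesis using mpow_eq_cgenideal[OF N a(1)] mpow_carrier[OF a(1)] that by simp
qed

lemma mpow_Suc_decomp:
  assumes b: "b \<in> carrier R" and dec: "mpow k = PIdl b <+>\<^bsub>R\<^esub> mpow (Suc k)"
  shows "mpow (Suc k) = m \<cdot> (PIdl b) <+>\<^bsub>R\<^esub> mpow (Suc (Suc k))"
proof -
  have "mpow (Suc k) = m \<cdot> mpow k" by simp
  also from dec have "\<dots> = m \<cdot> (PIdl b <+>\<^bsub>R\<^esub> mpow (Suc k))" by (rule arg_cong)
  also have "\<dots> = m \<cdot> (PIdl b) <+>\<^bsub>R\<^esub> mpow (Suc (Suc k))"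
    using ideal_prod_distr(1)[OF m_ideal cgenideal_ideal[OF b] mpow_ideal[of "Suc k"]] by simp
  finally show ?thesis .
qed

lemma mpow_mult_drops_two:
  assumes b: "b \<in> carrier R" and dec: "mpow (Suc j) = PIdl b <+>\<^bsub>R\<^esub> mpow (Suc (Suc j))"
    and x0: "x0 \<in> m" and y: "y \<in> m"
    and nin: "y \<otimes> b \<notin> PIdl (x0 \<otimes> b) <+>\<^bsub>R\<^esub> mpow (Suc (Suc (Suc j)))"
    and f: "f \<in> mpow j"
  shows "f \<otimes> x0 \<in> mpow (Suc (Suc j))"
proof -
  let ?A2 = "mpow (Suc (Suc j))" and ?A3 = "mpow (Suc (Suc (Suc j)))"
  have fc: "f \<in> carrier R" and x0c: "x0 \<in> carrier R" and yc: "y \<in> carrier R"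
    using mpow_carrier[OF f] m_carrier[OF x0] m_carrier[OF y] .
  obtain p t where pt: "p \<in> PIdl b" "t \<in> ?A2" "f \<otimes> x0 = p \<oplus> t"
    using mpow_mult_mem(2)[OF x0 f] unfolding dec by (rule set_add_memE)
  obtain c where c: "c \<in> carrier R" "p = c \<otimes> b" using pt(1) cgenideal_mem_iff by blast
  obtain p' t' where pt': "p' \<in> PIdl b" "t' \<in> ?A2" "f \<otimes> y = p' \<oplus> t'"
    using mpow_mult_mem(2)[OF y f] unfolding dec by (rule set_add_memE)
  obtain c' where c': "c' \<in> carrier R" "p' = c' \<otimes> b" using pt'(1) cgenideal_mem_iff by blast
  have tc: "t \<in> carrier R" "t' \<in> carrier R" using mpow_carrier[OF pt(2)] mpow_carrier[OF pt'(2)] .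
  show ?thesis
  proof (cases "c \<in> m")
    case True
    have "b \<in> mpow (Suc j)" using cgenideal_self[OF b] ideal_sum_upper(1)[OF cgenideal_ideal[OF b] mpow_ideal] dec by blast
    then have "c \<otimes> b \<in> ?A2" by (rule mpow_mult_mem(1)[OF True])
    then show ?thesis using pt c ideal_add_closed[OF mpow_ideal[of "Suc (Suc j)"]] by simp
  next
    case False
    then have cu: "c \<in> Units R" using not_in_m_unit c(1) by simp
    txt \<open>Compare (f x0) y with (f y) x0.\<close>
    have "c \<otimes> (y \<otimes> b) \<oplus> t \<otimes> y = (f \<otimes> x0) \<otimes> y"
      using pt(3) c tc yc b by (simp add: l_distr r_distr m_assoc m_comm m_lcomm)
    also have "\<dots> = (f \<otimes> y) \<otimes> x0" using fc x0c yc by (simp add: m_assoc m_comm m_lcomm)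
    also have "\<dots> = c' \<otimes> (x0 \<otimes> b) \<oplus> t' \<otimes> x0"
      using pt'(3) c' tc x0c b by (simp add: l_distr r_distr m_assoc m_comm m_lcomm)
    finally have "y \<otimes> b = (inv c \<otimes> c') \<otimes> (x0 \<otimes> b) \<oplus> inv c \<otimes> (t' \<otimes> x0 \<ominus> t \<otimes> y)"
      by (rule Units_mult_add_eq_solve[OF _ cu]) (use c'(1) b tc x0c yc in simp_all)
    moreover have A3: "ideal ?A3 R" by (rule mpow_ideal)
    then have "t' \<otimes> x0 \<ominus> t \<otimes> y \<in> ?A3"
      using ideal_add_closed[OF A3 mpow_mult_mem(2)[OF x0 pt'(2)] ideal_uminus_closed[OF A3 mpow_mult_mem(2)[OF y pt(2)]]]
      by (simp only: a_minus_def)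
    ultimately have "y \<otimes> b \<in> PIdl (x0 \<otimes> b) <+>\<^bsub>R\<^esub> ?A3"
      using Units_inv_closed[OF cu] m_closed[OF Units_inv_closed[OF cu] c'(1)] ideal.I_l_closed[OF A3]
      by (auto simp del: ideal_pow.simps simp: cgenideal_mem_iff intro!: set_add_memI)
    then show ?thesis using nin by simp
  qed
qed

lemma mpow_mult_drops_two_Suc:
  assumes x0: "x0 \<in> carrier R" and drop: "\<And>f. f \<in> mpow j \<Longrightarrow> f \<otimes> x0 \<in> mpow (Suc (Suc j))"
    and u: "u \<in> mpow (Suc j)"
  shows "u \<otimes> x0 \<in> mpow (Suc (Suc (Suc j)))"
  using u[simplified]
proof (induct u rule: ideal_prod.induct)
  case (prod p q)
  then have "(p \<otimes> q) \<otimes> x0 = p \<otimes> (q \<otimes> x0)" using m_carrier mpow_carrier x0 by (simp add: m_assoc)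
  then show ?case using mpow_mult_mem(1)[OF prod(1) drop[OF prod(2)]] by simp
next
  case (sum s1 s2)
  then have "s1 \<in> carrier R" "s2 \<in> carrier R"
    using ideal_prod_in_carrier[OF m_ideal mpow_ideal[of j]] by auto
  then have "(s1 \<oplus> s2) \<otimes> x0 = s1 \<otimes> x0 \<oplus> s2 \<otimes> x0" using x0 by (simp add: l_distr)
  then show ?case using sum(2,4) ideal_add_closed[OF mpow_ideal[of "Suc (Suc (Suc j))"]] by simp
qed

lemma mpow_Suc_cgenideal_subset:
  assumes b: "b \<in> carrier R" and dec: "mpow (Suc j) = PIdl b <+>\<^bsub>R\<^esub> mpow (Suc (Suc j))"
    and x0: "x0 \<in> m" and x0b: "x0 \<otimes> b \<notin> mpow (Suc (Suc (Suc j)))"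
  shows "m \<cdot> (PIdl b) \<subseteq> PIdl (x0 \<otimes> b) <+>\<^bsub>R\<^esub> mpow (Suc (Suc (Suc j)))"
proof -
  have "y \<otimes> b \<in> PIdl (x0 \<otimes> b) <+>\<^bsub>R\<^esub> mpow (Suc (Suc (Suc j)))" if y: "y \<in> m" for y
  proof (rule ccontr)
    assume "y \<otimes> b \<notin> PIdl (x0 \<otimes> b) <+>\<^bsub>R\<^esub> mpow (Suc (Suc (Suc j)))"
    then have "f \<otimes> x0 \<in> mpow (Suc (Suc j))" if "f \<in> mpow j" for f
      using mpow_mult_drops_two[OF b dec x0 y _ that] by blast
    then have "b \<otimes> x0 \<in> mpow (Suc (Suc (Suc j)))"
      using mpow_mult_drops_two_Suc[OF m_carrier[OF x0]] cgenideal_self[OF b]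
        ideal_sum_upper(1)[OF cgenideal_ideal[OF b] mpow_ideal] dec by blast
    then show False using x0b x0 b m_carrier by (simp add: m_comm)
  qed
  then show ?thesis using ideal_prod_cgenideal_obtain[OF m_ideal b] by (metis subsetI)
qed

lemma mpow_cgenideal_decomp_Suc:
  assumes b: "b \<in> carrier R" and dec: "mpow (Suc j) = PIdl b <+>\<^bsub>R\<^esub> mpow (Suc (Suc j))"
  obtains b' where "b' \<in> carrier R" "mpow (Suc (Suc j)) = PIdl b' <+>\<^bsub>R\<^esub> mpow (Suc (Suc (Suc j)))"
proof -
  let ?A2 = "mpow (Suc (Suc j))" and ?A3 = "mpow (Suc (Suc (Suc j)))"
  have mPb: "ideal (m \<cdot> (PIdl b)) R" by (rule ideal_prod_is_ideal[OF m_ideal cgenideal_ideal[OF b]])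
  have eq2: "?A2 = m \<cdot> (PIdl b) <+>\<^bsub>R\<^esub> ?A3" by (rule mpow_Suc_decomp[OF b dec])
  show ?thesis
  proof (cases "m \<cdot> (PIdl b) \<subseteq> ?A3")
    case True
    then have "?A2 = PIdl \<zero> <+>\<^bsub>R\<^esub> ?A3"
      using eq2 ideal_sum_absorb(2)[OF mpow_ideal mPb] ideal_sum_absorb(2)[OF mpow_ideal zeroideal]
        ideal_zero_mem[OF mpow_ideal] cgenideal_eq_genideal[OF zero_closed] genideal_zero
      by (simp del: ideal_pow.simps)
    then show ?thesis using that by blast
  next
    case False
    then obtain z where z: "z \<in> m \<cdot> (PIdl b)" "z \<notin> ?A3" by blast
    obtain x0 where x0: "x0 \<in> m" "z = x0 \<otimes> b" using ideal_prod_cgenideal_obtain[OF m_ideal b z(1)] .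
    have b': "x0 \<otimes> b \<in> carrier R" and Pb': "ideal (PIdl (x0 \<otimes> b)) R"
      using m_carrier[OF x0(1)] b cgenideal_ideal by auto
    have "?A2 \<subseteq> PIdl (x0 \<otimes> b) <+>\<^bsub>R\<^esub> ?A3"
      using eq2 mpow_Suc_cgenideal_subset[OF b dec x0(1)] z(2) x0(2)
        ideal_sum_least[OF add_ideals[OF Pb' mpow_ideal]] ideal_sum_upper(2)[OF Pb' mpow_ideal]
      by (simp del: ideal_pow.simps)
    moreover have "x0 \<otimes> b \<in> ?A2" using z(1) x0(2) eq2 ideal_sum_upper(1)[OF mPb mpow_ideal] by blast
    then have "PIdl (x0 \<otimes> b) <+>\<^bsub>R\<^esub> ?A3 \<subseteq> ?A2"
      using ideal_sum_least[OF mpow_ideal cgenideal_minimal[OF mpow_ideal] mpow_Suc_subset] by blast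
    ultimately show ?thesis using that[OF b'] by blast
  qed
qed

end

section \<open>The Hilbert function of an Artinian local ring\<close>

lemma sum_enat_neq_infinity:
  fixes h :: "'a \<Rightarrow> enat"
  assumes "finite A" "\<And>i. i \<in> A \<Longrightarrow> h i \<noteq> \<infinity>"
  shows "sum h A \<noteq> \<infinity>"
  using assms by (induct A rule: finite_induct) (auto simp: plus_eq_infty_iff_enat)

lemma sum_enat_ge_card:
  fixes h :: "nat \<Rightarrow> enat"
  assumes "finite A" "\<forall>i\<in>A. 1 \<le> h i"
  shows "enat (card A) \<le> sum h A"
proof -
  have "(\<Sum>i\<in>A. (1::enat)) \<le> sum h A" using assms(2) by (intro sum_mono) auto
  then show ?thesis by (simp add: of_nat_eq_enat)
qed

lemma sum_enat_eq_card_iff: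
  fixes h :: "nat \<Rightarrow> enat"
  assumes "finite A" "\<forall>i\<in>A. 1 \<le> h i"
  shows "sum h A = enat (card A) \<longleftrightarrow> (\<forall>i\<in>A. h i = 1)"
proof
  assume "\<forall>i\<in>A. h i = 1"
  then have "sum h A = (\<Sum>i\<in>A. (1::enat))" by (intro sum.cong) auto
  then show "sum h A = enat (card A)" by (simp add: of_nat_eq_enat)
next
  assume eq: "sum h A = enat (card A)"
  show "\<forall>i\<in>A. h i = 1"
  proof (rule ccontr)
    assume "\<not> (\<forall>i\<in>A. h i = 1)"
    then obtain j where j: "j \<in> A" "h j \<noteq> 1" by blast
    then have "2 \<le> h j" using assms(2) by (cases "h j") (auto simp: one_enat_def numeral_eq_enat)
    moreover have "enat (card (A - {j})) \<le> sum h (A - {j})"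
      using assms by (intro sum_enat_ge_card) auto
    ultimately have "2 + enat (card (A - {j})) \<le> sum h A"
      using sum.remove[OF assms(1) j(1), of h] by (simp add: add_mono)
    moreover have "card A = card (A - {j}) + 1"
      using card_Suc_Diff1[OF assms(1) j(1)] by simp
    ultimately show False using eq by (simp add: numeral_eq_enat)
  qed
qed

context cring
begin

lemma min_gens_eq_one_iff:
  assumes M: "ideal M R" and fg: "\<exists>G. finite G \<and> G \<subseteq> M \<and> Idl G = M"
  shows "min_gens R M = 1 \<longleftrightarrow> (\<exists>a\<in>carrier R. M = PIdl a) \<and> M \<noteq> {\<zero>}"
proof -
  let ?Q = "\<lambda>r. \<exists>G. finite G \<and> card G = r \<and> G \<subseteq> M \<and> Idl G = M"
  have Q0: "?Q 0 \<longleftrightarrow> M = {\<zero>}" using genideal_empty ideal_zero_mem[OF M] by auto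
  have Q1: "?Q 1 \<longleftrightarrow> (\<exists>a\<in>carrier R. M = PIdl a)"
    using cgenideal_eq_genideal cgenideal_self ideal.Icarr[OF M]
    by (auto simp: card_Suc_eq)
  have "(LEAST r. ?Q r) = 1 \<longleftrightarrow> ?Q 1 \<and> \<not> ?Q 0"
  proof
    assume L: "(LEAST r. ?Q r) = 1"
    have "?Q (LEAST r. ?Q r)" by (rule LeastI_ex) (use fg in blast)
    then have "?Q 1" by (simp only: L)
    moreover have "\<not> ?Q 0"
    proof
      assume "?Q 0"
      then have "(LEAST r. ?Q r) = 0" by (rule Least_eq_0)
      then show False using L by simp
    qed
    ultimately show "?Q 1 \<and> \<not> ?Q 0" ..
  next
    assume Q: "?Q 1 \<and> \<not> ?Q 0"
    show "(LEAST r. ?Q r) = 1"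
    proof (rule Least_equality)
      show "?Q 1" using Q ..
      have "\<not> ?Q 0" using Q ..
      then show "1 \<le> y" if "?Q y" for y using that by (cases y) auto
    qed
  qed
  then show ?thesis unfolding min_gens_def Q0 Q1 by blast
qed

end

context local_cring
begin

lemma carrier_neq_zero: "carrier R \<noteq> {\<zero>}"
  using one_closed one_not_in_m ideal_zero_mem[OF m_ideal] by force

lemma hilbert_fun_mpow: "hilbert_fun R m i = module_length R (mpow (Suc i)) (mpow i)"
  by (simp add: hilbert_fun_def del: ideal_pow.simps)

lemma hilbert_fun_ge_one:
  assumes N: "mpow N = {\<zero>}" and nz: "mpow i \<noteq> {\<zero>}"
  shows "1 \<le> hilbert_fun R m i"
  unfolding hilbert_fun_mpow
  using module_length_ge_one[OF mpow_ideal mpow_ideal] mpow_Suc_neq[OF N nz] mpow_Suc_subset by blast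

lemma hilbert_fun_eq_zero:
  assumes "mpow i = {\<zero>}"
  shows "hilbert_fun R m i = 0"
proof -
  have "mpow (Suc i) = mpow i"
    using mpow_Suc_subset[of i] ideal_zero_mem[OF mpow_ideal[of "Suc i"]] assms
    by (auto simp del: ideal_pow.simps)
  then show ?thesis unfolding hilbert_fun_mpow using module_length_self by (simp del: ideal_pow.simps)
qed

lemma hilbert_fun_le_one:
  assumes b: "b \<in> carrier R" and dec: "mpow i = PIdl b <+>\<^bsub>R\<^esub> mpow (Suc i)"
  shows "hilbert_fun R m i \<le> 1"
proof -
  have "b \<in> mpow i" using cgenideal_self[OF b] ideal_sum_upper(1)[OF cgenideal_ideal[OF b] mpow_ideal] dec by blast
  then have "module_length R (mpow (Suc i)) (PIdl b <+>\<^bsub>R\<^esub> mpow (Suc i)) \<le> 1"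
    using module_length_cgenideal_le_one[OF mpow_ideal b] mpow_mult_mem(1) by blast
  then show ?thesis unfolding hilbert_fun_mpow using dec by (simp del: ideal_pow.simps)
qed

lemma hilbert_fun_finite:
  assumes fg: "\<exists>G. finite G \<and> G \<subseteq> mpow i \<and> Idl G = mpow i"
  shows "hilbert_fun R m i \<noteq> \<infinity>"
proof -
  obtain G where G: "finite G" "G \<subseteq> mpow i" "Idl G = mpow i" using fg by blast
  have "Idl G <+>\<^bsub>R\<^esub> mpow (Suc i) = mpow i"
    using ideal_sum_absorb(1)[OF mpow_ideal mpow_ideal mpow_Suc_subset] G(3) by simp
  moreover have "module_length R (mpow (Suc i)) (Idl G <+>\<^bsub>R\<^esub> mpow (Suc i)) \<le> enat (card G)"
    using module_length_genideal_le_card[OF G(1) _ mpow_ideal] G(2) mpow_carrier mpow_mult_mem(1) by blast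
  ultimately show ?thesis unfolding hilbert_fun_mpow by (metis enat_ord_simps(4) infinity_ileE)
qed

lemma mpow_cgenideal_decomp_above:
  assumes v: "1 \<le> v" and a: "a \<in> carrier R" and Pv: "mpow v = PIdl a"
  obtains b where "b \<in> carrier R" "mpow (v + d) = PIdl b <+>\<^bsub>R\<^esub> mpow (Suc (v + d))"
proof (induct d arbitrary: thesis)
  case 0
  have "mpow (Suc v) \<subseteq> PIdl a" using mpow_Suc_subset Pv by blast
  then have "PIdl a <+>\<^bsub>R\<^esub> mpow (Suc v) = PIdl a"
    by (rule ideal_sum_absorb(1)[OF cgenideal_ideal[OF a] mpow_ideal])
  then show ?case using Pv by (intro 0[OF a]) (simp del: ideal_pow.simps)
next
  case (Suc d)
  obtain b where b: "b \<in> carrier R" "mpow (v + d) = PIdl b <+>\<^bsub>R\<^esub> mpow (Suc (v + d))" by (rule Suc.hyps)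
  obtain j where j: "v + d = Suc j" using v by (cases "v + d") auto
  show ?case
    by (rule mpow_cgenideal_decomp_Suc[of b j]) (use b j Suc.prems in auto)
qed

end

text \<open>Artinian local rings, described for the purposes of length computations by a nilpotent
  maximal ideal with finitely generated powers.\<close>

locale artinian_local_cring = local_cring +
  assumes mpow_nilpotent: "\<exists>N. ideal_pow R m N = {\<zero>}"
    and mpow_finitely_generated: "\<exists>G. finite G \<and> G \<subseteq> ideal_pow R m k \<and> Idl G = ideal_pow R m k"
begin

lemma mpow_socle_degree:
  shows "mpow (socle_degree R m) \<noteq> {\<zero>}" and "mpow (Suc (socle_degree R m)) = {\<zero>}" and "mpow k \<noteq> {\<zero>} \<Longrightarrow> k \<le> socle_degree R m"
proof -
  obtain N where N: "mpow N = {\<zero>}" using mpow_nilpotent ..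
  have bound: "mpow k \<noteq> {\<zero>} \<Longrightarrow> k \<le> N" for k using mpow_zero_beyond[OF N, of k] by linarith
  show "mpow (socle_degree R m) \<noteq> {\<zero>}"
    unfolding socle_degree_def by (rule GreatestI_nat[where k = 0]) (use carrier_neq_zero bound in auto)
  show le: "mpow k \<noteq> {\<zero>} \<Longrightarrow> k \<le> socle_degree R m" for k
    unfolding socle_degree_def by (rule Greatest_le_nat) (use bound in auto)
  show "mpow (Suc (socle_degree R m)) = {\<zero>}" using le[of "Suc (socle_degree R m)"] by linarith
qed

lemma mpow_neq_zero_iff: "mpow k \<noteq> {\<zero>} \<longleftrightarrow> k \<le> socle_degree R m"
  using mpow_socle_degree mpow_antimono ideal_zero_mem[OF mpow_ideal] by blast

lemma module_length_eq_hilbert_sum: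
  assumes "v \<le> Suc (socle_degree R m)"
  shows "module_length R {\<zero>} (carrier R)
    = (\<Sum>i<v. hilbert_fun R m i) + (\<Sum>i\<in>{v..socle_degree R m}. hilbert_fun R m i)"
proof -
  have "module_length R {\<zero>} (carrier R) = (\<Sum>i<Suc (socle_degree R m). hilbert_fun R m i)"
    using module_length_telescope[of "Suc (socle_degree R m)" mpow] mpow_ideal mpow_Suc_subset mpow_socle_degree(2)
    by (simp add: hilbert_fun_mpow del: ideal_pow.simps(2))
  also have "\<dots> = (\<Sum>i<v. hilbert_fun R m i) + (\<Sum>i\<in>{v..socle_degree R m}. hilbert_fun R m i)"
    using sum.atLeastLessThan_concat[of 0 v "Suc (socle_degree R m)" "hilbert_fun R m"] assms
    by (metis atLeast0LessThan atLeastLessThanSuc_atLeastAtMost zero_le)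
  finally show ?thesis .
qed

lemma hilbert_sum_tail:
  assumes "v \<le> Suc (socle_degree R m)"
  shows "enat (Suc (socle_degree R m) - v) \<le> (\<Sum>i\<in>{v..socle_degree R m}. hilbert_fun R m i)"
    and "(\<Sum>i\<in>{v..socle_degree R m}. hilbert_fun R m i) = enat (Suc (socle_degree R m) - v) \<longleftrightarrow> (\<forall>i. v \<le> i \<and> i \<le> socle_degree R m \<longrightarrow> hilbert_fun R m i = 1)"
proof -
  obtain N where N: "mpow N = {\<zero>}" using mpow_nilpotent ..
  have "\<forall>i\<in>{v..socle_degree R m}. 1 \<le> hilbert_fun R m i" using hilbert_fun_ge_one[OF N] mpow_neq_zero_iff by auto
  then show "enat (Suc (socle_degree R m) - v) \<le> (\<Sum>i\<in>{v..socle_degree R m}. hilbert_fun R m i)"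
    and "(\<Sum>i\<in>{v..socle_degree R m}. hilbert_fun R m i) = enat (Suc (socle_degree R m) - v) \<longleftrightarrow> (\<forall>i. v \<le> i \<and> i \<le> socle_degree R m \<longrightarrow> hilbert_fun R m i = 1)"
    using sum_enat_ge_card[of "{v..socle_degree R m}"] sum_enat_eq_card_iff[of "{v..socle_degree R m}"] by auto
qed

theorem socle_degree_le_length:
  assumes "v \<le> Suc (socle_degree R m)"
  shows "enat (socle_degree R m) + (\<Sum>i<v. hilbert_fun R m i) + 1 \<le> module_length R {\<zero>} (carrier R) + enat v"
    and "v \<le> socle_degree R m \<Longrightarrow> enat (socle_degree R m) + (\<Sum>i<v. hilbert_fun R m i) + 1 = module_length R {\<zero>} (carrier R) + enat v
      \<longleftrightarrow> (\<forall>i. v \<le> i \<and> i \<le> socle_degree R m \<longrightarrow> hilbert_fun R m i = 1)"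
proof -
  have fin: "(\<Sum>i\<in>A. hilbert_fun R m i) \<noteq> \<infinity>" if "finite A" for A
    using sum_enat_neq_infinity[OF that hilbert_fun_finite[OF mpow_finitely_generated]] .
  obtain x where x: "(\<Sum>i<v. hilbert_fun R m i) = enat x" using fin[of "{..<v}"] by auto
  obtain t where t: "(\<Sum>i\<in>{v..socle_degree R m}. hilbert_fun R m i) = enat t" using fin[of "{v..socle_degree R m}"] by auto
  note L = module_length_eq_hilbert_sum[OF assms] and tail = hilbert_sum_tail[OF assms]
  show "enat (socle_degree R m) + (\<Sum>i<v. hilbert_fun R m i) + 1 \<le> module_length R {\<zero>} (carrier R) + enat v"
    using tail(1) assms unfolding L x t by (simp add: one_enat_def)
  show "enat (socle_degree R m) + (\<Sum>i<v. hilbert_fun R m i) + 1 = module_length R {\<zero>} (carrier R) + enat v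
      \<longleftrightarrow> (\<forall>i. v \<le> i \<and> i \<le> socle_degree R m \<longrightarrow> hilbert_fun R m i = 1)" if "v \<le> socle_degree R m"
    using tail(2) that unfolding L x t by (auto simp: one_enat_def)
qed

theorem min_gens_mpow_eq_one_iff:
  assumes v: "1 \<le> v" "v \<le> socle_degree R m"
  shows "min_gens R (mpow v) = 1 \<longleftrightarrow> (\<forall>i. v \<le> i \<and> i \<le> socle_degree R m \<longrightarrow> hilbert_fun R m i = 1)"
proof
  assume "min_gens R (mpow v) = 1"
  then obtain a where a: "a \<in> carrier R" "mpow v = PIdl a"
    using min_gens_eq_one_iff[OF mpow_ideal mpow_finitely_generated] by blast
  show "\<forall>i. v \<le> i \<and> i \<le> socle_degree R m \<longrightarrow> hilbert_fun R m i = 1"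
  proof (intro allI impI)
    fix i assume i: "v \<le> i \<and> i \<le> socle_degree R m"
    then obtain d where d: "i = v + d" using le_Suc_ex by blast
    obtain b where "b \<in> carrier R" "mpow i = PIdl b <+>\<^bsub>R\<^esub> mpow (Suc i)"
      using mpow_cgenideal_decomp_above[OF v(1) a] d by blast
    then have "hilbert_fun R m i \<le> 1" by (rule hilbert_fun_le_one)
    moreover obtain N where "mpow N = {\<zero>}" using mpow_nilpotent ..
    then have "1 \<le> hilbert_fun R m i" using hilbert_fun_ge_one mpow_neq_zero_iff i by blast
    ultimately show "hilbert_fun R m i = 1" by simp
  qed
next
  assume "\<forall>i. v \<le> i \<and> i \<le> socle_degree R m \<longrightarrow> hilbert_fun R m i = 1"
  moreover obtain N where "mpow N = {\<zero>}" using mpow_nilpotent ..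
  ultimately obtain a where "a \<in> carrier R" "mpow v = PIdl a"
    using mpow_principal_of_length_one v(2) unfolding hilbert_fun_mpow by blast
  then show "min_gens R (mpow v) = 1"
    using min_gens_eq_one_iff[OF mpow_ideal mpow_finitely_generated] mpow_neq_zero_iff v(2) by blast
qed

end

section \<open>Passing to the quotient by an ideal\<close>

context cring
begin

lemma FactRing_carrier_eq: "carrier (R Quot I) = (\<lambda>x. I +> x) ` carrier R"
  unfolding FactRing_def A_RCOSETS_def' by auto

lemma FactRing_zero: "\<zero>\<^bsub>R Quot I\<^esub> = I"
  unfolding FactRing_def by simp

lemma FactRing_one: "\<one>\<^bsub>R Quot I\<^esub> = I +> \<one>"
  unfolding FactRing_def by simp

lemma rcos_mult:
  "ideal I R \<Longrightarrow> x \<in> carrier R \<Longrightarrow> y \<in> carrier R \<Longrightarrow> (I +> x) \<otimes>\<^bsub>R Quot I\<^esub> (I +> y) = I +> (x \<otimes> y)"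
  using ring_hom_mult[OF ideal.rcos_ring_hom] by metis

lemma rcos_add:
  "ideal I R \<Longrightarrow> x \<in> carrier R \<Longrightarrow> y \<in> carrier R \<Longrightarrow> (I +> x) \<oplus>\<^bsub>R Quot I\<^esub> (I +> y) = I +> (x \<oplus> y)"
  using ring_hom_add[OF ideal.rcos_ring_hom] by metis

lemma Union_rcos_image: "ideal I R \<Longrightarrow> ideal A R \<Longrightarrow> I \<subseteq> A \<Longrightarrow> \<Union> ((\<lambda>x. I +> x) ` A) = A"
  using ideal_incl_iff by blast

lemma rcos_image_inj:
  assumes "ideal I R" "ideal A R" "I \<subseteq> A" "ideal B R" "I \<subseteq> B"
    and "(\<lambda>x. I +> x) ` A = (\<lambda>x. I +> x) ` B"
  shows "A = B"
  using Union_rcos_image[OF assms(1,2,3)] Union_rcos_image[OF assms(1,4,5)] assms(6) by metis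

lemma rcos_image_Union:
  assumes I: "ideal I R" and J: "ideal J (R Quot I)"
  shows "(\<lambda>x. I +> x) ` (\<Union> J) = J"
proof
  have sub: "J \<subseteq> carrier (R Quot I)" using J additive_subgroup.a_subset ideal_def by blast
  show "(\<lambda>x. I +> x) ` (\<Union> J) \<subseteq> J"
    using canonical_proj_vimage_in_carrier[OF I sub] canonical_proj_vimage_mem_iff[OF I sub] by blast
  show "J \<subseteq> (\<lambda>x. I +> x) ` (\<Union> J)"
  proof
    fix X assume X: "X \<in> J"
    then obtain r where r: "r \<in> carrier R" "X = I +> r" using sub FactRing_carrier_eq by blast
    then show "X \<in> (\<lambda>x. I +> x) ` (\<Union> J)"
      using X canonical_proj_vimage_mem_iff[OF I sub r(1)] by blast
  qed
qed

lemma Union_quot_ideal: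
  assumes I: "ideal I R" and J: "ideal J (R Quot I)"
  shows "ideal (\<Union> J) R" and "I \<subseteq> \<Union> J"
proof -
  show "ideal (\<Union> J) R" by (rule quot_ideal_imp_ring_ideal[OF I J])
  have "I \<in> J" using additive_subgroup.zero_closed[OF ideal.axioms(1)[OF J]] FactRing_zero by simp
  then show "I \<subseteq> \<Union> J" by blast
qed

lemma rcos_image_eq_zero_iff:
  assumes I: "ideal I R" and A: "ideal A R"
  shows "(\<lambda>x. I +> x) ` A = {I} \<longleftrightarrow> A \<subseteq> I"
proof
  assume eq: "(\<lambda>x. I +> x) ` A = {I}"
  show "A \<subseteq> I"
  proof
    fix a assume a: "a \<in> A"
    then have "I +> a = I" using eq by blast
    then show "a \<in> I" using ideal.rcos_const_imp_mem[OF I] ideal.Icarr[OF A a] by simp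
  qed
next
  assume "A \<subseteq> I"
  then show "(\<lambda>x. I +> x) ` A = {I}" using ideal_zero_mem[OF A] a_rcos_zero[OF I] by force
qed

lemma rcos_image_ideal_prod_subset:
  assumes I: "ideal I R" and X: "ideal X R" and Y: "ideal Y R"
  shows "((\<lambda>x. I +> x) ` X) \<cdot>\<^bsub>R Quot I\<^esub> ((\<lambda>x. I +> x) ` Y) \<subseteq> (\<lambda>x. I +> x) ` (X \<cdot> Y)"
proof
  fix z assume "z \<in> ((\<lambda>x. I +> x) ` X) \<cdot>\<^bsub>R Quot I\<^esub> ((\<lambda>x. I +> x) ` Y)"
  then show "z \<in> (\<lambda>x. I +> x) ` (X \<cdot> Y)"
  proof (induct z rule: ideal_prod.induct)
    case (prod i j)
    then obtain x y where xy: "x \<in> X" "i = I +> x" "y \<in> Y" "j = I +> y" by blast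
    then have "i \<otimes>\<^bsub>R Quot I\<^esub> j = I +> (x \<otimes> y)"
      using rcos_mult[OF I] ideal.Icarr[OF X] ideal.Icarr[OF Y] by simp
    moreover have "x \<otimes> y \<in> X \<cdot> Y" using xy by (intro ideal_prod.prod)
    ultimately show ?case by blast
  next
    case (sum s1 s2)
    then obtain u1 u2 where u: "u1 \<in> X \<cdot> Y" "s1 = I +> u1" "u2 \<in> X \<cdot> Y" "s2 = I +> u2" by blast
    then have "s1 \<oplus>\<^bsub>R Quot I\<^esub> s2 = I +> (u1 \<oplus> u2)"
      using rcos_add[OF I] ideal_prod_in_carrier[OF X Y] by blast
    moreover have "u1 \<oplus> u2 \<in> X \<cdot> Y" using u by (intro ideal_prod.sum)
    ultimately show ?case by blast
  qed
qed

lemma rcos_image_ideal_prod: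
  assumes I: "ideal I R" and X: "ideal X R" and Y: "ideal Y R"
  shows "((\<lambda>x. I +> x) ` X) \<cdot>\<^bsub>R Quot I\<^esub> ((\<lambda>x. I +> x) ` Y) = (\<lambda>x. I +> x) ` (X \<cdot> Y)"
proof
  show "(\<lambda>x. I +> x) ` (X \<cdot> Y) \<subseteq> ((\<lambda>x. I +> x) ` X) \<cdot>\<^bsub>R Quot I\<^esub> ((\<lambda>x. I +> x) ` Y)"
  proof
    fix Z assume "Z \<in> (\<lambda>x. I +> x) ` (X \<cdot> Y)"
    then obtain z where z: "z \<in> X \<cdot> Y" "Z = I +> z" by blast
    from z(1) have "I +> z \<in> ((\<lambda>x. I +> x) ` X) \<cdot>\<^bsub>R Quot I\<^esub> ((\<lambda>x. I +> x) ` Y)"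
    proof (induct z rule: ideal_prod.induct)
      case (prod i j)
      have "I +> (i \<otimes> j) = (I +> i) \<otimes>\<^bsub>R Quot I\<^esub> (I +> j)"
        using rcos_mult[OF I] prod ideal.Icarr[OF X] ideal.Icarr[OF Y] by simp
      moreover have "I +> i \<in> (\<lambda>x. I +> x) ` X" "I +> j \<in> (\<lambda>x. I +> x) ` Y" using prod by auto
      ultimately show ?case by (metis ideal_prod.prod)
    next
      case (sum s1 s2)
      have "I +> (s1 \<oplus> s2) = (I +> s1) \<oplus>\<^bsub>R Quot I\<^esub> (I +> s2)"
        using rcos_add[OF I] sum ideal_prod_in_carrier[OF X Y] by blast
      then show ?case using ideal_prod.sum[OF sum(2) sum(4)] by simp
    qed
    then show "Z \<in> ((\<lambda>x. I +> x) ` X) \<cdot>\<^bsub>R Quot I\<^esub> ((\<lambda>x. I +> x) ` Y)" using z(2) by simp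
  qed
qed (rule rcos_image_ideal_prod_subset[OF assms])

lemma rcos_image_ideal_pow:
  assumes I: "ideal I R" and X: "ideal X R"
  shows "ideal_pow (R Quot I) ((\<lambda>x. I +> x) ` X) k = (\<lambda>x. I +> x) ` (ideal_pow R X k)"
proof (induct k)
  case 0
  then show ?case by (simp add: FactRing_carrier_eq)
next
  case (Suc k)
  then show ?case using rcos_image_ideal_prod[OF I X ideal_pow_is_ideal[OF X]] by simp
qed

lemma module_length_FactRing:
  assumes I: "ideal I R" and B: "ideal B R" and A: "ideal A R" and IB: "I \<subseteq> B" and BA: "B \<subseteq> A"
  shows "module_length (R Quot I) ((\<lambda>x. I +> x) ` B) ((\<lambda>x. I +> x) ` A) = module_length R B A"
proof (rule antisym)
  let ?p = "\<lambda>x. I +> x"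
  show "module_length (R Quot I) (?p ` B) (?p ` A) \<le> module_length R B A"
  proof (rule module_length_leI)
    fix r D assume D: "ideal_chain (R Quot I) (?p ` B) (?p ` A) r D"
    have "ideal_chain R B A r (\<lambda>i. \<Union> (D i))"
      unfolding ideal_chain_def
    proof (intro conjI allI impI)
      fix i assume i: "i < r"
      then have "D i \<subset> D (Suc i)" "ideal (D i) (R Quot I)" "ideal (D (Suc i)) (R Quot I)"
        using D unfolding ideal_chain_def by auto
      then show "\<Union> (D i) \<subset> \<Union> (D (Suc i))"
        using rcos_image_Union[OF I] by (metis Union_mono psubset_eq)
    qed (use D Union_rcos_image[OF I B IB] Union_rcos_image[OF I A] IB BA Union_quot_ideal(1)[OF I]
      in \<open>auto simp: ideal_chain_def\<close>)
    then show "enat r \<le> module_length R B A" by (rule ideal_chain_length_le)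
  qed
  show "module_length R B A \<le> module_length (R Quot I) (?p ` B) (?p ` A)"
  proof (rule module_length_leI)
    fix r C assume C: "ideal_chain R B A r C"
    have IC: "I \<subseteq> C i" if "i \<le> r" for i using ideal_chain_mono[OF C, of 0 i] that C IB unfolding ideal_chain_def by auto
    have "ideal_chain (R Quot I) (?p ` B) (?p ` A) r (\<lambda>i. ?p ` C i)"
      unfolding ideal_chain_def
    proof (intro conjI allI impI)
      fix i assume i: "i < r"
      then have Ci: "C i \<subset> C (Suc i)" "ideal (C i) R" "ideal (C (Suc i)) R"
        and "I \<subseteq> C i" "I \<subseteq> C (Suc i)" using C IC unfolding ideal_chain_def by auto
      then have "?p ` C i \<noteq> ?p ` C (Suc i)" using rcos_image_inj[OF I Ci(2) _ Ci(3)] by blast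
      then show "?p ` C i \<subset> ?p ` C (Suc i)" using Ci(1) by blast
    qed (use C ring_ideal_imp_quot_ideal[OF I] in \<open>auto simp: ideal_chain_def\<close>)
    then show "enat r \<le> module_length (R Quot I) (?p ` B) (?p ` A)" by (rule ideal_chain_length_le)
  qed
qed

lemma genideal_FactRing:
  assumes I: "ideal I R" and G: "G \<subseteq> carrier R"
  shows "Idl\<^bsub>R Quot I\<^esub> ((\<lambda>x. I +> x) ` G) = (\<lambda>x. I +> x) ` (Idl G)"
proof
  let ?p = "\<lambda>x. I +> x"
  have Q: "ring (R Quot I)" by (rule ideal.quotient_is_ring[OF I])
  have pG: "?p ` G \<subseteq> carrier (R Quot I)" using G FactRing_carrier_eq by blast
  show "Idl\<^bsub>R Quot I\<^esub> (?p ` G) \<subseteq> ?p ` (Idl G)"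
    by (rule ring.genideal_minimal[OF Q ring_ideal_imp_quot_ideal[OF I genideal_ideal[OF G]]])
      (use genideal_self[OF G] in blast)
  define J where "J = Idl\<^bsub>R Quot I\<^esub> (?p ` G)"
  have J: "ideal J (R Quot I)" unfolding J_def by (rule ring.genideal_ideal[OF Q pG])
  have Jc: "J \<subseteq> carrier (R Quot I)" using J additive_subgroup.a_subset ideal_def by blast
  have "G \<subseteq> \<Union> J"
  proof
    fix g assume g: "g \<in> G"
    then have "I +> g \<in> J" unfolding J_def using ring.genideal_self[OF Q pG] by blast
    then show "g \<in> \<Union> J" using canonical_proj_vimage_mem_iff[OF I Jc] g G by blast
  qed
  then have "?p ` (Idl G) \<subseteq> ?p ` (\<Union> J)" using genideal_minimal[OF Union_quot_ideal(1)[OF I J]] by blast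
  then show "?p ` (Idl G) \<subseteq> Idl\<^bsub>R Quot I\<^esub> (?p ` G)" using rcos_image_Union[OF I J] unfolding J_def by simp
qed

end

lemma (in local_cring) local_cring_FactRing:
  assumes I: "ideal I R" and Im: "I \<subseteq> m"
  shows "local_cring (R Quot I) ((\<lambda>x. I +> x) ` m)"
proof -
  let ?p = "\<lambda>x. I +> x"
  have Qm: "ideal (?p ` m) (R Quot I)" by (rule ring_ideal_imp_quot_ideal[OF I m_ideal])
  have mem: "x \<in> carrier R \<Longrightarrow> I +> x \<in> ?p ` m \<longleftrightarrow> x \<in> m" for x
    using canonical_proj_vimage_mem_iff[OF I, of "?p ` m"] Union_rcos_image[OF I m_ideal Im]
      Qm additive_subgroup.a_subset ideal_def by metis
  show ?thesis
  proof (intro local_cring.intro local_cring_axioms.intro Qm)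
    show "cring (R Quot I)" by (rule ideal.quotient_is_cring[OF I is_cring])
    show "\<one>\<^bsub>R Quot I\<^esub> \<notin> ?p ` m" using FactRing_one mem[of \<one>] one_not_in_m by simp
    fix X assume X: "X \<in> carrier (R Quot I)" "X \<notin> ?p ` m"
    then obtain x where x: "x \<in> carrier R" "X = I +> x" "x \<notin> m" using FactRing_carrier_eq by blast
    then have xu: "x \<in> Units R" using not_in_m_unit by simp
    have "(I +> inv x) \<otimes>\<^bsub>R Quot I\<^esub> X = \<one>\<^bsub>R Quot I\<^esub>" "X \<otimes>\<^bsub>R Quot I\<^esub> (I +> inv x) = \<one>\<^bsub>R Quot I\<^esub>"
      using x xu rcos_mult[OF I] FactRing_one by (simp_all add: Units_r_inv Units_l_inv)
    moreover have "I +> inv x \<in> carrier (R Quot I)" using xu FactRing_carrier_eq by blast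
    ultimately show "X \<in> Units (R Quot I)" using X(1) unfolding Units_def by blast
  qed
qed

section \<open>Quotients of Noetherian local rings by primary ideals\<close>

context cring
begin

lemma noetherian_exists_maximalideal:
  assumes noeth: "noetherian_ring R" and J: "ideal J R" "\<one> \<notin> J"
  obtains M where "maximalideal M R" "J \<subseteq> M"
proof -
  define A where "A = {K. ideal K R \<and> J \<subseteq> K \<and> \<one> \<notin> K}"
  have "\<exists>M\<in>A. \<forall>X\<in>A. M \<subseteq> X \<longrightarrow> X = M"
  proof (rule subset_Zorn)
    fix C assume C: "subset.chain A C"
    show "\<exists>U\<in>A. \<forall>X\<in>C. X \<subseteq> U"
    proof (cases "C = {}")
      case True
      then show ?thesis using J unfolding A_def by auto
    next
      case False
      have CA: "C \<subseteq> A" using C unfolding subset_chain_def by simp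
      have "subset.chain {I. ideal I R} C" using C unfolding subset_chain_def A_def by auto
      then have "\<Union>C \<in> C" using noetherian_ring.ideal_chain_is_trivial[OF noeth False] by simp
      then show ?thesis using CA by blast
    qed
  qed
  then obtain M where M: "M \<in> A" "\<And>X. X \<in> A \<Longrightarrow> M \<subseteq> X \<Longrightarrow> X = M" by blast
  have "maximalideal M R"
  proof (rule maximalidealI)
    show "ideal M R" "carrier R \<noteq> M" using M(1) unfolding A_def by auto
    fix J' assume J': "ideal J' R" "M \<subseteq> J'" "J' \<subseteq> carrier R"
    show "J' = M \<or> J' = carrier R"
      using ideal.one_imp_carrier[OF J'(1)] M J' unfolding A_def by blast
  qed
  then show ?thesis using M(1) that unfolding A_def by blast
qed

lemma noetherian_local_unit:
  assumes noeth: "noetherian_ring R" and uniq: "\<forall>J. maximalideal J R \<longrightarrow> J = n"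
    and x: "x \<in> carrier R" "x \<notin> n"
  shows "x \<in> Units R"
proof (rule ccontr)
  assume nu: "x \<notin> Units R"
  have "\<one> \<notin> PIdl x"
  proof
    assume "\<one> \<in> PIdl x"
    then obtain y where "y \<in> carrier R" "\<one> = y \<otimes> x" using cgenideal_mem_iff by blast
    then show False using nu x(1) m_comm unfolding Units_def by auto
  qed
  then obtain M where "maximalideal M R" "PIdl x \<subseteq> M"
    using noetherian_exists_maximalideal[OF noeth cgenideal_ideal[OF x(1)]] by blast
  then show False using uniq cgenideal_self[OF x(1)] x(2) by blast
qed

lemma ideal_pow_genideal_subset:
  assumes "finite G" "G \<subseteq> carrier R" "ideal K R" "\<forall>g\<in>G. \<exists>k::nat. g [^] k \<in> K"
  shows "\<exists>N. ideal_pow R (Idl G) N \<subseteq> K"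
  using assms
proof (induct G rule: finite_induct)
  case empty
  have "ideal_pow R (Idl {}) 1 \<subseteq> K"
    using ideal_pow_one[OF genideal_ideal[of "{}"]] genideal_empty ideal_zero_mem[OF empty(2)] by simp
  then show ?case ..
next
  case (insert g G)
  have g: "g \<in> carrier R" and G: "G \<subseteq> carrier R" and K: "ideal K R" using insert by auto
  obtain q where q: "ideal_pow R (Idl G) q \<subseteq> K" using insert(3)[OF G K] insert(6) by blast
  obtain p :: nat where p: "g [^] p \<in> K" using insert(6) by blast
  let ?X = "PIdl g" and ?Y = "Idl G"
  have X: "ideal ?X R" and Y: "ideal ?Y R" and XY: "ideal (?X <+>\<^bsub>R\<^esub> ?Y) R"
    using cgenideal_ideal[OF g] genideal_ideal[OF G] add_ideals by auto
  have "ideal_pow R ?X p \<subseteq> K" using cgenideal_pow_subset[OF g, of p] cgenideal_minimal[OF K p] by blast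
  then have "ideal_pow R (?X <+>\<^bsub>R\<^esub> ?Y) p \<subseteq> ?Y <+>\<^bsub>R\<^esub> K"
    using ideal_pow_sum_subset[OF X Y] set_add_mono[of _ K ?Y ?Y R] set_add_comm[of K ?Y]
      ideal_subset_carrier[OF K] ideal_subset_carrier[OF Y] by blast
  then have "ideal_pow R (?X <+>\<^bsub>R\<^esub> ?Y) (p * q) \<subseteq> ideal_pow R (?Y <+>\<^bsub>R\<^esub> K) q"
    using ideal_pow_mult[OF XY] ideal_pow_mono[OF ideal_pow_is_ideal[OF XY] add_ideals[OF Y K]] by simp
  also have "\<dots> \<subseteq> K"
    using ideal_pow_sum_subset[OF Y K] ideal_sum_least[OF K q subset_refl] by blast
  finally show ?case unfolding genideal_insert[OF g G] by blast
qed

end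

lemma noetherian_local_ring_local_cring:
  assumes "noetherian_local_ring S n"
  shows "local_cring S n"
proof -
  have noeth: "noetherian_ring S" and cr: "cring S" and nmax: "maximalideal n S"
    and uniq: "\<forall>J. maximalideal J S \<longrightarrow> J = n"
    using assms unfolding noetherian_local_ring_def local_ring_def by auto
  have "\<one>\<^bsub>S\<^esub> \<notin> n"
    using ideal.one_imp_carrier[OF maximalideal.axioms(1)[OF nmax]] maximalideal.I_notcarr[OF nmax] by blast
  then show ?thesis
    using maximalideal.axioms(1)[OF nmax] cring.noetherian_local_unit[OF cr noeth uniq]
    by (intro local_cring.intro local_cring_axioms.intro cr) auto
qed

locale primary_quotient = local_cring +
  fixes I
  assumes noetherian: "noetherian_ring R"
    and primary: "primary_to R m I"
    and nonzero: "I \<noteq> {\<zero>}"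
begin

lemma I_ideal: "ideal I R" and m_eq_radical: "m = {x \<in> carrier R. \<exists>k::nat. x [^] k \<in> I}"
  using primary unfolding primary_to_def by auto

lemma I_subset_m: "I \<subseteq> m"
proof
  fix x assume "x \<in> I"
  moreover have "x \<in> carrier R" using ideal.Icarr[OF I_ideal] calculation .
  ultimately have "x \<in> carrier R" "x [^] (1::nat) \<in> I" by simp_all
  then show "x \<in> m" using m_eq_radical by blast
qed

lemma mpow_subset_I: "\<exists>N. mpow N \<subseteq> I"
proof -
  obtain G where G: "G \<subseteq> carrier R" "finite G" "m = Idl G"
    using noetherian_ring.finetely_gen[OF noetherian m_ideal] by blast
  have "\<forall>g\<in>G. \<exists>k::nat. g [^] k \<in> I"
  proof
    fix g assume "g \<in> G"
    then have "g \<in> m" using G genideal_self by blast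
    then show "\<exists>k::nat. g [^] k \<in> I" using m_eq_radical by blast
  qed
  then show ?thesis using ideal_pow_genideal_subset[OF G(2,1) I_ideal] G(3) by simp
qed

lemma v_order:
  shows "I \<subseteq> mpow (v_order R m I)" and "\<not> I \<subseteq> mpow (Suc (v_order R m I))" and "1 \<le> v_order R m I"
proof -
  obtain N where N: "mpow N \<subseteq> I" using mpow_subset_I ..
  obtain A where A: "finite A" "A \<subseteq> carrier R" "I = Idl A"
    using noetherian_ring.finetely_gen[OF noetherian I_ideal] by blast
  have "\<not> I \<subseteq> mpow (Suc N)"
  proof
    assume "I \<subseteq> mpow (Suc N)"
    then have "Idl A \<subseteq> m \<cdot> (Idl A)" using ideal_prod_mono[OF m_ideal I_ideal subset_refl N] A(3) by simp
    then show False using nakayama[OF A(1,2)] A(3) nonzero by simp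
  qed
  then have bound: "I \<subseteq> mpow k \<Longrightarrow> k \<le> N" for k using mpow_antimono[of "Suc N" k] by (meson not_less_eq_eq order_trans)
  show "I \<subseteq> mpow (v_order R m I)" unfolding v_order_def
    by (rule GreatestI_nat[where k = 0]) (use bound ideal_subset_carrier[OF I_ideal] in auto)
  have le: "I \<subseteq> mpow k \<Longrightarrow> k \<le> v_order R m I" for k
    unfolding v_order_def by (rule Greatest_le_nat) (use bound in auto)
  then show "\<not> I \<subseteq> mpow (Suc (v_order R m I))" by fastforce
  show "1 \<le> v_order R m I" using le[of 1] I_subset_m ideal_pow_one[OF m_ideal] by simp
qed

lemma quotient_mpow:
  "ideal_pow (R Quot I) (quot_ideal R I m) k = (\<lambda>x. I +> x) ` mpow k"
  unfolding quot_ideal_def by (rule rcos_image_ideal_pow[OF I_ideal m_ideal])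

lemma quotient_mpow_eq_zero_iff:
  "ideal_pow (R Quot I) (quot_ideal R I m) k = {\<zero>\<^bsub>R Quot I\<^esub>} \<longleftrightarrow> mpow k \<subseteq> I"
  unfolding quotient_mpow FactRing_zero by (rule rcos_image_eq_zero_iff[OF I_ideal mpow_ideal])

lemma quotient_artinian: "artinian_local_cring (R Quot I) (quot_ideal R I m)"
proof -
  interpret Q: local_cring "R Quot I" "quot_ideal R I m"
    unfolding quot_ideal_def by (rule local_cring_FactRing[OF I_ideal I_subset_m])
  show ?thesis
  proof unfold_locales
    show "\<exists>N. ideal_pow (R Quot I) (quot_ideal R I m) N = {\<zero>\<^bsub>R Quot I\<^esub>}"
      using mpow_subset_I quotient_mpow_eq_zero_iff by blast
    fix k
    obtain G where G: "G \<subseteq> carrier R" "finite G" "mpow k = Idl G"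
      using noetherian_ring.finetely_gen[OF noetherian mpow_ideal] by blast
    then show "\<exists>G. finite G \<and> G \<subseteq> ideal_pow (R Quot I) (quot_ideal R I m) k
        \<and> Idl\<^bsub>R Quot I\<^esub> G = ideal_pow (R Quot I) (quot_ideal R I m) k"
      using genideal_FactRing[OF I_ideal G(1)] genideal_self[OF G(1)] unfolding quotient_mpow
      by (intro exI[of _ "(\<lambda>x. I +> x) ` G"]) auto
  qed
qed

lemma quotient_length: "module_length (R Quot I) {\<zero>\<^bsub>R Quot I\<^esub>} (carrier (R Quot I)) = module_length R I (carrier R)"
proof -
  have "{\<zero>\<^bsub>R Quot I\<^esub>} = (\<lambda>x. I +> x) ` I"
    using rcos_image_eq_zero_iff[OF I_ideal I_ideal] FactRing_zero by simp
  then show ?thesis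
    using module_length_FactRing[OF I_ideal I_ideal oneideal subset_refl ideal_subset_carrier[OF I_ideal]]
    by (simp add: FactRing_carrier_eq)
qed

lemma quotient_hilbert_fun:
  assumes "i < v_order R m I"
  shows "hilbert_fun (R Quot I) (quot_ideal R I m) i = hilbert_fun R m i"
proof -
  have "I \<subseteq> mpow (Suc i)" using v_order(1) mpow_antimono[of "Suc i" "v_order R m I"] assms by auto
  then show ?thesis
    unfolding hilbert_fun_def quotient_mpow
    using module_length_FactRing[OF I_ideal mpow_ideal mpow_ideal _ mpow_Suc_subset] by blast
qed

lemma v_order_le_Suc_socle_degree:
  "v_order R m I \<le> Suc (socle_degree (R Quot I) (quot_ideal R I m))"
proof -
  interpret Q: artinian_local_cring "R Quot I" "quot_ideal R I m" by (rule quotient_artinian)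
  obtain w where w: "v_order R m I = Suc w" using v_order(3) by (cases "v_order R m I") auto
  have Iw: "I \<subseteq> mpow (Suc w)" and nI: "\<not> I \<subseteq> mpow (Suc (Suc w))" using v_order(1,2)[unfolded w] .
  have "\<not> mpow w \<subseteq> I"
  proof
    assume "mpow w \<subseteq> I"
    then have eq: "mpow (Suc w) = mpow w" using Iw mpow_Suc_subset[of w] by blast
    have "mpow (Suc (Suc w)) = m \<cdot> mpow (Suc w)" by simp
    also have "\<dots> = m \<cdot> mpow w" by (simp only: eq)
    also have "\<dots> = mpow (Suc w)" by simp
    finally show False using nI Iw by metis
  qed
  then show ?thesis using Q.mpow_neq_zero_iff quotient_mpow_eq_zero_iff w by simp
qed

lemma v_order_le_socle_degree:
  assumes "\<nexists>k. I = mpow k"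
  shows "v_order R m I \<le> socle_degree (R Quot I) (quot_ideal R I m)"
proof -
  interpret Q: artinian_local_cring "R Quot I" "quot_ideal R I m" by (rule quotient_artinian)
  have "\<not> mpow (v_order R m I) \<subseteq> I" using assms v_order(1) by blast
  then show ?thesis using Q.mpow_neq_zero_iff quotient_mpow_eq_zero_iff by simp
qed

end

theorem theorem3p3:
  fixes S :: "('a, 'b) ring_scheme" and n I :: "'a set"
  assumes S: "noetherian_local_ring S n"
    and I: "primary_to S n I"
    and I0: "I \<noteq> {\<zero>\<^bsub>S\<^esub>}"
  defines "R \<equiv> S Quot I"
    and "m \<equiv> quot_ideal S I n"
    and "v \<equiv> v_order S n I"
  shows "(enat (socle_degree R m) + (\<Sum>i<v. hilbert_fun S n i) + 1
           \<le> module_length S I (carrier S) + enat v)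
    \<and> ((\<nexists>k. I = ideal_pow S n k) \<longrightarrow>
      ((enat (socle_degree R m) + (\<Sum>i<v. hilbert_fun S n i) + 1
           = module_length S I (carrier S) + enat v)
       \<longleftrightarrow> min_gens R (ideal_pow R m v) = 1)
    \<and> (min_gens R (ideal_pow R m v) = 1
       \<longleftrightarrow> ((\<forall>i<v. hilbert_fun R m i = hilbert_fun S n i)
           \<and> (\<forall>i. v \<le> i \<and> i \<le> socle_degree R m \<longrightarrow> hilbert_fun R m i = 1)
           \<and> (\<forall>i>socle_degree R m. hilbert_fun R m i = 0))))"
proof -
  interpret primary_quotient S n I
    using noetherian_local_ring_local_cring[OF S] S I I0 unfolding noetherian_local_ring_def
    by (intro primary_quotient.intro primary_quotient_axioms.intro) auto
  interpret Q: artinian_local_cring R m unfolding R_def m_def by (rule quotient_artinian)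
  have hS: "\<forall>i<v. hilbert_fun R m i = hilbert_fun S n i"
    unfolding R_def m_def v_def using quotient_hilbert_fun by blast
  then have sum: "(\<Sum>i<v. hilbert_fun S n i) = (\<Sum>i<v. hilbert_fun R m i)" by simp
  have length: "module_length S I (carrier S) = module_length R {\<zero>\<^bsub>R\<^esub>} (carrier R)"
    unfolding R_def by (rule quotient_length[symmetric])
  have zero: "\<forall>i>socle_degree R m. hilbert_fun R m i = 0"
    using Q.hilbert_fun_eq_zero Q.mpow_neq_zero_iff by (meson leD)
  have v: "v \<le> Suc (socle_degree R m)" "1 \<le> v" "(\<nexists>k. I = ideal_pow S n k) \<Longrightarrow> v \<le> socle_degree R m"
    unfolding R_def m_def v_def using v_order_le_Suc_socle_degree v_order(3) v_order_le_socle_degree by auto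
  show ?thesis
    unfolding sum length
    using Q.socle_degree_le_length[OF v(1)] Q.min_gens_mpow_eq_one_iff[OF v(2)] v(3) hS zero by blast
qed

end
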